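(* Let $0<\varepsilon<1$, let $n\ge1$ and $k\ge1$ be integers, and let $A=(a_{pq})$ be a real $n\times n$ matrix with $a_{11}>0$. Suppose $\lambda>0$ is a simple eigenvalue of $A$ with $A\mathbf u=\lambda\mathbf u$ and $\mathbf v^TA=\lambda\mathbf v^T$ for some entrywise positive $\mathbf u,\mathbf v\in\mathbb R^n$. In each part below $B=(b_{pq})$ is a real matrix of order $k+n-1$, and in all parts $w_i=u_1$ for $1\le i\le k-1$ and $w_i=u_{i-k+1}$ for $k\le i\le k+n-1$. Then: 1. For every $j\in\{1,\dots,k\}$, let $$b_{pq}=\begin{cases} \lambda,&\text{if }(p,q)\in\{(1,2),\dots,(k-1,k)\};\\ a_{11},&\text{if }(p,q)=(k,1);\\ a_{p-k+1,1},&\text{if }p\in\{k+1,\dots,k+n-1\},\ q=j;\\ a_{p-k+1,q-k+1},&\text{if }p\in\{k,\dots,k+n-1\},\ q\in\{k+1,\dots,k+n-1\};\\ 0,&\text{otherwise}. \end{cases}$$ Then $\lambda$ is a simple eigenvalue of $B$, $B\mathbf w=\lambda\mathbf w$ and $\mathbf z^TB=\lambda\mathbf z^T$ where $z_i=\frac{a_{11}v_1}{\lambda}$ for $1\le i\le j-1$, $z_i=v_1$ for $j\le i\le k-1$, $z_i=v_{i-k+1}$ for $k\le i\le k+n-1$; consequently $B$ is algebraically positive. 2. For every $j\in\{1,\dots,k-1\}$ and $s\in\{1,\dots,k\}\setminus\{j+1\}$, let $$b_{pq}=\begin{cases} \varepsilon\lambda,&\text{if }(p,q)=(j,j+1);\\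 \lambda,&\text{if }(p,q)\in\{(1,2),\dots,(k-1,k)\}\setminus\{(j,j+1)\};\\ a_{11},&\text{if }(p,q)=(k,1);\\ (1-\varepsilon)\lambda,&\text{if }(p,q)=(j,s);\\ a_{p-k+1,1},&\text{if }p\in\{k+1,\dots,k+n-1\},\ q=s;\\ a_{p-k+1,q-k+1},&\text{if }p\in\{k,\dots,k+n-1\},\ q\in\{k+1,\dots,k+n-1\};\\ 0,&\text{otherwise}. \end{cases}$$ Then $\lambda$ is a simple eigenvalue of $B$ with $B\mathbf w=\lambda\mathbf w$ and $\mathbf z^TB=\lambda\mathbf z^T$, and $B$ is algebraically positive, where: if $s\le j$, $z_i=\frac{a_{11}v_1}{\lambda}$ for $1\le i\le s-1$, $z_i=\frac{v_1}{\varepsilon}$ for $s\le i\le j$, $z_i=v_1$ for $j+1\le i\le k-1$, $z_i=v_{i-k+1}$ for $k\le i\le k+n-1$; if $s\ge j+2$, $z_i=\frac{a_{11}v_1}{\lambda}$ for $1\le i\le j$, $z_i=\frac{\varepsilon a_{11}v_1}{\lambda}$ for $j+1\le i\le s-1$, $z_i=v_1$ for $s\le i\le k-1$, $z_i=v_{i-k+1}$ for $k\le i\le k+n-1$. Further, $b_{js}z_j+\sum_{i=1}^{n-1}b_{k+i,s}z_{k+i}$ equals $\left(\frac{\lambda}{\varepsilon}-a_{11}\right)v_1$ if $s\le j$ and equals $(\lambda-\varepsilon a_{11})v_1$ if $s\ge j+2$, and this quantity is positive for a suitable choice of $\varepsilon\in(0,1)$. 3. For every $s\in\{2,\dots,k\}$,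 let $$b_{pq}=\begin{cases} \lambda,&\text{if }(p,q)\in\{(1,2),\dots,(k-1,k)\};\\ \varepsilon a_{11},&\text{if }(p,q)=(k,1);\\ (1-\varepsilon)a_{11},&\text{if }(p,q)=(k,s);\\ a_{p-k+1,1},&\text{if }p\in\{k+1,\dots,k+n-1\},\ q=s;\\ a_{p-k+1,q-k+1},&\text{if }p\in\{k,\dots,k+n-1\},\ q\in\{k+1,\dots,k+n-1\};\\ 0,&\text{otherwise}. \end{cases}$$ Then $\lambda$ is a simple eigenvalue of $B$, $B\mathbf w=\lambda\mathbf w$ and $\mathbf z^TB=\lambda\mathbf z^T$ where $z_i=\frac{\varepsilon a_{11}v_1}{\lambda}$ for $1\le i\le s-1$, $z_i=v_1$ for $s\le i\le k-1$, $z_i=v_{i-k+1}$ for $k\le i\le k+n-1$; consequently $B$ is algebraically positive. Further, $b_{ks}z_k+\sum_{i=1}^{n-1}b_{k+i,s}z_{k+i}=(\lambda-\varepsilon a_{11})v_1$, and this is positive for a suitable choice of $\varepsilon\in(0,1)$.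
   Context: A real square matrix $M$ is algebraically positive if there is a real polynomial $f$ such that every entry of $f(M)$ is positive. A simple eigenvalue is one of algebraic multiplicity one. Index ranges of the form $a\le i\le b$ with $a>b$ are empty. *)

theory Defs
  imports "Jordan_Normal_Form.Char_Poly" "HOL-Computational_Algebra.Polynomial"
begin

(* Conventions: matrices are Jordan_Normal_Form "real mat" (0-indexed).
   The paper's 1-indexed entry a_pq of A is  A $$ (p-1, q-1);  u_i is u $ (i-1).
   Matrices B are given by 1-indexed entry functions b p q and turned into
   JNF matrices by mat_of_1 (entry (i,j) of the JNF matrix = b (i+1) (j+1)). *)

definition mat_of_1 :: "nat \<Rightarrow> (nat \<Rightarrow> nat \<Rightarrow> real) \<Rightarrow> real mat" where
  "mat_of_1 N b = mat N N (\<lambda>(i, j). b (i + 1) (j + 1))"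

definition vec_of_1 :: "nat \<Rightarrow> (nat \<Rightarrow> real) \<Rightarrow> real vec" where
  "vec_of_1 N z = vec N (\<lambda>i. z (i + 1))"

definition simple_eigenvalue :: "real mat \<Rightarrow> real \<Rightarrow> bool" where
  "simple_eigenvalue M l \<longleftrightarrow> order l (char_poly M) = 1"

definition algebraically_positive :: "real mat \<Rightarrow> bool" where
  "algebraically_positive M \<longleftrightarrow> (\<exists>f :: real poly. \<forall>i < dim_row M. \<forall>j < dim_col M.
      (\<Sum>d\<le>degree f. coeff f d * (M ^\<^sub>m d) $$ (i, j)) > 0)"

definition wvec :: "real vec \<Rightarrow> nat \<Rightarrow> nat \<Rightarrow> real" where
  "wvec u k i = (if i \<le> k - 1 then u $ 0 else u $ (i - k))"

definition B1 :: "real mat \<Rightarrow> real \<Rightarrow> nat \<Rightarrow> nat \<Rightarrow> nat \<Rightarrow> nat \<Rightarrow> nat \<Rightarrow> real" where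
  "B1 A l k n j p q =
    (if 1 \<le> p \<and> p \<le> k - 1 \<and> q = p + 1 then l
     else if p = k \<and> q = 1 then A $$ (0, 0)
     else if k + 1 \<le> p \<and> p \<le> k + n - 1 \<and> q = j then A $$ (p - k, 0)
     else if k \<le> p \<and> p \<le> k + n - 1 \<and> k + 1 \<le> q \<and> q \<le> k + n - 1 then A $$ (p - k, q - k)
     else 0)"

definition z1 :: "real mat \<Rightarrow> real \<Rightarrow> real vec \<Rightarrow> nat \<Rightarrow> nat \<Rightarrow> nat \<Rightarrow> real" where
  "z1 A l v k j i =
    (if i \<le> j - 1 then A $$ (0, 0) * v $ 0 / l
     else if i \<le> k - 1 then v $ 0
     else v $ (i - k))"

definition B2 :: "real mat \<Rightarrow> real \<Rightarrow> real \<Rightarrow> nat \<Rightarrow> nat \<Rightarrow> nat \<Rightarrow> nat \<Rightarrow> nat \<Rightarrow> nat \<Rightarrow> real" where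
  "B2 A l e k n j s p q =
    (if p = j \<and> q = j + 1 then e * l
     else if 1 \<le> p \<and> p \<le> k - 1 \<and> q = p + 1 then l
     else if p = k \<and> q = 1 then A $$ (0, 0)
     else if p = j \<and> q = s then (1 - e) * l
     else if k + 1 \<le> p \<and> p \<le> k + n - 1 \<and> q = s then A $$ (p - k, 0)
     else if k \<le> p \<and> p \<le> k + n - 1 \<and> k + 1 \<le> q \<and> q \<le> k + n - 1 then A $$ (p - k, q - k)
     else 0)"

definition z2 :: "real mat \<Rightarrow> real \<Rightarrow> real \<Rightarrow> real vec \<Rightarrow> nat \<Rightarrow> nat \<Rightarrow> nat \<Rightarrow> nat \<Rightarrow> real" where
  "z2 A l e v k j s i =
    (if s \<le> j then
       (if i \<le> s - 1 then A $$ (0, 0) * v $ 0 / l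
        else if i \<le> j then v $ 0 / e
        else if i \<le> k - 1 then v $ 0
        else v $ (i - k))
     else
       (if i \<le> j then A $$ (0, 0) * v $ 0 / l
        else if i \<le> s - 1 then e * A $$ (0, 0) * v $ 0 / l
        else if i \<le> k - 1 then v $ 0
        else v $ (i - k)))"

definition B3 :: "real mat \<Rightarrow> real \<Rightarrow> real \<Rightarrow> nat \<Rightarrow> nat \<Rightarrow> nat \<Rightarrow> nat \<Rightarrow> nat \<Rightarrow> real" where
  "B3 A l e k n s p q =
    (if 1 \<le> p \<and> p \<le> k - 1 \<and> q = p + 1 then l
     else if p = k \<and> q = 1 then e * A $$ (0, 0)
     else if p = k \<and> q = s then (1 - e) * A $$ (0, 0)
     else if k + 1 \<le> p \<and> p \<le> k + n - 1 \<and> q = s then A $$ (p - k, 0)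
     else if k \<le> p \<and> p \<le> k + n - 1 \<and> k + 1 \<le> q \<and> q \<le> k + n - 1 then A $$ (p - k, q - k)
     else 0)"

definition z3 :: "real mat \<Rightarrow> real \<Rightarrow> real \<Rightarrow> real vec \<Rightarrow> nat \<Rightarrow> nat \<Rightarrow> nat \<Rightarrow> real" where
  "z3 A l e v k s i =
    (if i \<le> s - 1 then e * A $$ (0, 0) * v $ 0 / l
     else if i \<le> k - 1 then v $ 0
     else v $ (i - k))"

end

theory Submission
  imports Defs
begin

text \<open>Every matrix \<open>B\<close> of the theorem arises from \<open>A\<close> by replacing its first index by \<open>k\<close> new
  indices whose rows sum to \<open>l\<close>, while row \<open>k\<close> splits \<open>a\<^sub>1\<^sub>1\<close>. Hence \<open>w\<close>, which repeats \<open>u\<^sub>1\<close> on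
  the new indices, is a right eigenvector, and \<open>z\<close> is chosen to be a left one. The equations of
  the new rows force every \<open>l\<close>-eigenvector of \<open>B\<close> to be constant on the new indices, so it
  restricts to an \<open>l\<close>-eigenvector of \<open>A\<close>; as \<open>l\<close> is simple for \<open>A\<close>, the eigenspace of \<open>B\<close> is
  spanned by \<open>w\<close>. Deflating \<open>B\<close> along \<open>w\<close> and using \<open>z \<bullet> w > 0\<close> shows that \<open>l\<close> is an algebraically
  simple eigenvalue of \<open>B\<close>. Finally, a simple eigenvalue with positive right and left
  eigenvectors gives algebraic positivity: some polynomial \<open>p\<close> yields \<open>p(B) \<noteq> 0\<close> with
  \<open>B p(B) = l p(B) = p(B) B\<close>, which forces \<open>p(B)\<close> to be a nonzero multiple of \<open>w z\<^sup>T\<close>.\<close>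

section \<open>Polynomials in a matrix\<close>

lemma pow_mat_Suc_left:
  assumes "A \<in> carrier_mat n n"
  shows "A ^\<^sub>m Suc d = A * A ^\<^sub>m d"
proof (induction d)
  case 0
  then show ?case using assms by simp
next
  case (Suc d)
  have "A ^\<^sub>m Suc (Suc d) = (A * A ^\<^sub>m d) * A" using Suc by simp
  also have "\<dots> = A * A ^\<^sub>m Suc d" using assms by (simp add: assoc_mult_mat[of _ n n _ n _ n])
  finally show ?case .
qed

definition poly_mat :: "'a :: comm_ring_1 poly \<Rightarrow> 'a mat \<Rightarrow> 'a mat" where
  "poly_mat p M = mat (dim_row M) (dim_row M) (\<lambda>(i, j). \<Sum>d\<le>degree p. coeff p d * (M ^\<^sub>m d) $$ (i, j))"

lemma poly_mat_carrier [simp]: "M \<in> carrier_mat n n \<Longrightarrow> poly_mat p M \<in> carrier_mat n n"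
  by (simp add: poly_mat_def)

lemma dim_poly_mat [simp]:
  "dim_row (poly_mat p M) = dim_row M" "dim_col (poly_mat p M) = dim_row M"
  by (simp_all add: poly_mat_def)

lemma index_poly_mat:
  assumes "degree p \<le> K" and "M \<in> carrier_mat n n" and "i < n" and "j < n"
  shows "poly_mat p M $$ (i, j) = (\<Sum>d\<le>K. coeff p d * (M ^\<^sub>m d) $$ (i, j))"
proof -
  have "(\<Sum>d\<le>K. coeff p d * (M ^\<^sub>m d) $$ (i, j)) = (\<Sum>d\<le>degree p. coeff p d * (M ^\<^sub>m d) $$ (i, j))"
    using assms(1) by (intro sum.mono_neutral_right) (auto simp: coeff_eq_0)
  then show ?thesis using assms by (simp add: poly_mat_def)
qed

lemma algebraically_positive_iff_poly_mat:
  assumes "M \<in> carrier_mat n n"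
  shows "algebraically_positive M \<longleftrightarrow> (\<exists>f. \<forall>i<n. \<forall>j<n. poly_mat f M $$ (i, j) > 0)"
  using assms by (simp add: algebraically_positive_def poly_mat_def)

lemma poly_mat_diff:
  assumes "M \<in> carrier_mat n n"
  shows "poly_mat (p - q) M = poly_mat p M - poly_mat q M"
proof (rule eq_matI)
  fix i j assume "i < dim_row (poly_mat p M - poly_mat q M)" "j < dim_col (poly_mat p M - poly_mat q M)"
  then have ij: "i < n" "j < n" using assms by auto
  define K where "K = max (degree p) (degree q)"
  have "degree p \<le> K" "degree q \<le> K" "degree (p - q) \<le> K"
    unfolding K_def by (auto intro: degree_diff_le_max)
  then show "poly_mat (p - q) M $$ (i, j) = (poly_mat p M - poly_mat q M) $$ (i, j)"
    using ij assms by (simp add: index_poly_mat[where K = K] sum_subtractf left_diff_distrib)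
qed (use assms in auto)

lemma poly_mat_smult:
  assumes "M \<in> carrier_mat n n"
  shows "poly_mat (Polynomial.smult c p) M = c \<cdot>\<^sub>m poly_mat p M"
  by (rule eq_matI)
    (use assms in \<open>auto simp: index_poly_mat[where K = "degree p"] degree_smult_le sum_distrib_left mult.assoc\<close>)

lemma mult_poly_mat_index:
  assumes X: "X \<in> carrier_mat n n" and M: "M \<in> carrier_mat n n" and "i < n" "j < n"
  shows "(X * poly_mat p M) $$ (i, j) = (\<Sum>d\<le>degree p. coeff p d * (X * M ^\<^sub>m d) $$ (i, j))"
    and "(poly_mat p M * X) $$ (i, j) = (\<Sum>d\<le>degree p. coeff p d * (M ^\<^sub>m d * X) $$ (i, j))"
  using assms
  by (auto simp: poly_mat_def scalar_prod_def sum_distrib_left sum_distrib_right mult_ac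
      intro: sum.swap)

lemma poly_mat_pCons_0:
  assumes M: "M \<in> carrier_mat n n"
  shows "poly_mat (pCons 0 p) M = M * poly_mat p M" and "poly_mat (pCons 0 p) M = poly_mat p M * M"
proof -
  have shift: "poly_mat (pCons 0 p) M $$ (i, j) = (\<Sum>d\<le>degree p. coeff p d * (M ^\<^sub>m Suc d) $$ (i, j))"
    if "i < n" "j < n" for i j
  proof -
    have "poly_mat (pCons 0 p) M $$ (i, j)
        = (\<Sum>d\<le>Suc (degree p). coeff (pCons 0 p) d * (M ^\<^sub>m d) $$ (i, j))"
      using that M by (intro index_poly_mat) (auto simp: degree_pCons_le)
    then show ?thesis by (simp only: sum.atMost_Suc_shift) simp
  qed
  show "poly_mat (pCons 0 p) M = M * poly_mat p M"
  proof (rule eq_matI)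
    fix i j assume "i < dim_row (M * poly_mat p M)" "j < dim_col (M * poly_mat p M)"
    then have "i < n" "j < n" using M by auto
    then show "poly_mat (pCons 0 p) M $$ (i, j) = (M * poly_mat p M) $$ (i, j)"
      by (simp only: shift mult_poly_mat_index(1)[OF M M] pow_mat_Suc_left[OF M])
  qed (use M in auto)
  show "poly_mat (pCons 0 p) M = poly_mat p M * M"
  proof (rule eq_matI)
    fix i j assume "i < dim_row (poly_mat p M * M)" "j < dim_col (poly_mat p M * M)"
    then have "i < n" "j < n" using M by auto
    then show "poly_mat (pCons 0 p) M $$ (i, j) = (poly_mat p M * M) $$ (i, j)"
      by (simp only: shift mult_poly_mat_index(2)[OF M M] pow_mat.simps)
  qed (use M in auto)
qed

lemma poly_mat_linear_factor:
  assumes "M \<in> carrier_mat n n"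
  shows "poly_mat ([:-l, 1:] * p) M = M * poly_mat p M - l \<cdot>\<^sub>m poly_mat p M"
    and "poly_mat ([:-l, 1:] * p) M = poly_mat p M * M - l \<cdot>\<^sub>m poly_mat p M"
proof -
  have "[:-l, 1:] * p = pCons 0 p - Polynomial.smult l p" by simp
  then show "poly_mat ([:-l, 1:] * p) M = M * poly_mat p M - l \<cdot>\<^sub>m poly_mat p M"
    and "poly_mat ([:-l, 1:] * p) M = poly_mat p M * M - l \<cdot>\<^sub>m poly_mat p M"
    using assms poly_mat_pCons_0[OF assms] by (simp_all add: poly_mat_diff poly_mat_smult)
qed

lemma minus_mat_eq_0_iff:
  fixes A B :: "'a :: ab_group_add mat"
  assumes "A \<in> carrier_mat nr nc" and "B \<in> carrier_mat nr nc"
  shows "A - B = 0\<^sub>m nr nc \<longleftrightarrow> A = B"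
proof
  assume "A - B = 0\<^sub>m nr nc"
  then have "(A - B) $$ (i, j) = 0" if "i < nr" "j < nc" for i j
    using that by simp
  then show "A = B" using assms by (intro eq_matI) auto
qed (use assms in auto)

lemma poly_mat_mult_eigenvector:
  assumes M: "M \<in> carrier_mat n n" and w: "eigenvector M w l"
  shows "poly_mat p M *\<^sub>v w = poly p l \<cdot>\<^sub>v w"
proof (rule eq_vecI)
  have wc: "w \<in> carrier_vec n" using w M by (simp add: eigenvector_def)
  fix i assume "i < dim_vec (poly p l \<cdot>\<^sub>v w)"
  then have i: "i < n" using wc by simp
  have "(poly_mat p M *\<^sub>v w) $ i = (\<Sum>d\<le>degree p. coeff p d * (M ^\<^sub>m d *\<^sub>v w) $ i)"
    using i M wc by (simp add: poly_mat_def scalar_prod_def sum_distrib_left sum_distrib_right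
        mult_ac sum.swap[where A = "{..degree p}"])
  also have "\<dots> = (\<Sum>d\<le>degree p. coeff p d * l ^ d) * w $ i"
    using i wc by (simp add: eigenvector_pow[OF M w] sum_distrib_right mult.assoc)
  finally show "(poly_mat p M *\<^sub>v w) $ i = (poly p l \<cdot>\<^sub>v w) $ i"
    using i wc by (simp add: poly_altdef)
qed (use M w in \<open>auto simp: eigenvector_def\<close>)

text \<open>The \<open>n * n + 1\<close> powers \<open>M ^ d\<close>, \<open>d \<le> n * n\<close>, are linearly dependent: written as the
  columns of a square matrix padded by a zero row they give a singular matrix, and a kernel vector of
  it is the coefficient list of an annihilating polynomial.\<close>

lemma poly_mat_annihilator_exists:
  fixes M :: "'a :: field mat"
  assumes M: "M \<in> carrier_mat n n"
  obtains g where "g \<noteq> 0" and "poly_mat g M = 0\<^sub>m n n"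
proof -
  define K where "K = n * n"
  define C where "C = mat (Suc K) (Suc K)
    (\<lambda>(r, d). if r < K then (M ^\<^sub>m d) $$ (r div n, r mod n) else (0 :: 'a))"
  have C: "C \<in> carrier_mat (Suc K) (Suc K)" unfolding C_def by simp
  have C_rows: "C = mat\<^sub>r (Suc K) (Suc K) (\<lambda>r. if r = K then 0\<^sub>v (Suc K) else row C r)"
    by (rule eq_matI) (auto simp: C_def)
  have "det C = 0"
    by (subst C_rows, rule det_row_0) (auto simp: C_def)
  then obtain c where c: "c \<in> carrier_vec (Suc K)" "c \<noteq> 0\<^sub>v (Suc K)" and Cc: "C *\<^sub>v c = 0\<^sub>v (Suc K)"
    using det_0_iff_vec_prod_zero[OF C] by auto
  define g where "g = Poly (list_of_vec c)"
  have coeff_g: "coeff g d = (if d < Suc K then c $ d else 0)" for d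
    using c by (auto simp: g_def nth_default_def)
  have "g \<noteq> 0"
  proof
    assume "g = 0"
    then have "c $ d = 0" if "d < Suc K" for d
      using coeff_g[of d] that by simp
    then show False using c by (auto intro: eq_vecI)
  qed
  moreover have "poly_mat g M = 0\<^sub>m n n"
  proof (rule eq_matI)
    fix i j assume "i < dim_row (0\<^sub>m n n :: 'a mat)" "j < dim_col (0\<^sub>m n n :: 'a mat)"
    then have ij: "i < n" "j < n" by auto
    have "i * n + j < Suc i * n" using ij by simp
    also have "\<dots> \<le> K" unfolding K_def using ij by (intro mult_right_mono) auto
    finally have r: "i * n + j < K" .
    have idx: "(i * n + j) div n = i" "(i * n + j) mod n = j"
      using ij by auto
    have "degree g \<le> K"
      using coeff_g by (intro degree_le) auto
    then have "poly_mat g M $$ (i, j) = (\<Sum>d<Suc K. c $ d * (M ^\<^sub>m d) $$ (i, j))"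
      using ij M by (simp add: index_poly_mat[where K = K] coeff_g lessThan_Suc_atMost)
    also have "\<dots> = (C *\<^sub>v c) $ (i * n + j)"
      using r c idx by (simp add: C_def scalar_prod_def atLeast0LessThan mult.commute)
    finally show "poly_mat g M $$ (i, j) = 0\<^sub>m n n $$ (i, j)"
      using Cc r ij by simp
  qed (use M in simp_all)
  ultimately show ?thesis using that by blast
qed

lemma poly_mat_two_sided_eigen_exists:
  fixes M :: "'a :: field mat"
  assumes M: "M \<in> carrier_mat n n" and w: "eigenvector M w l"
  obtains p where "poly_mat p M \<noteq> 0\<^sub>m n n"
    and "M * poly_mat p M = l \<cdot>\<^sub>m poly_mat p M" and "poly_mat p M * M = l \<cdot>\<^sub>m poly_mat p M"
proof -
  let ?Z = "\<lambda>p. poly_mat p M = 0\<^sub>m n n"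
  have step: "\<exists>p. \<not> ?Z p \<and> ?Z ([:-l, 1:] * p)" if "\<not> ?Z h" and "?Z ([:-l, 1:] ^ e * h)" for e h
    using that
  proof (induction e arbitrary: h)
    case (Suc e)
    show ?case
    proof (cases "?Z ([:-l, 1:] * h)")
      case False
      moreover have "?Z ([:-l, 1:] ^ e * ([:-l, 1:] * h))"
        using Suc.prems(2) by (simp only: power_Suc2 mult.assoc)
      ultimately show ?thesis using Suc.IH by blast
    qed (use Suc.prems in blast)
  qed simp
  obtain g where "g \<noteq> 0" and g: "?Z g"
    using poly_mat_annihilator_exists[OF M] by blast
  then obtain h where gh: "g = [:-l, 1:] ^ order l g * h" and "\<not> [:-l, 1:] dvd h"
    using order_decomp by blast
  then have hl: "poly h l \<noteq> 0" by (simp add: poly_eq_0_iff_dvd)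
  have wc: "w \<in> carrier_vec n" and w0: "w \<noteq> 0\<^sub>v n"
    using w M by (auto simp: eigenvector_def)
  have "\<not> ?Z h"
  proof
    assume "?Z h"
    then have "poly h l \<cdot>\<^sub>v w = 0\<^sub>v n"
      using wc by (auto simp flip: poly_mat_mult_eigenvector[OF M w] intro!: eq_vecI)
    then have "(1 / poly h l) \<cdot>\<^sub>v (poly h l \<cdot>\<^sub>v w) = 0\<^sub>v n"
      by auto
    then show False using hl w0 by (simp add: smult_smult_assoc)
  qed
  then obtain p where "\<not> ?Z p" and Z: "?Z ([:-l, 1:] * p)"
    using step[of h "order l g"] g gh by auto
  moreover have "M * poly_mat p M = l \<cdot>\<^sub>m poly_mat p M"
    using Z unfolding poly_mat_linear_factor(1)[OF M]
    by (subst (asm) minus_mat_eq_0_iff) (use M in auto)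
  moreover have "poly_mat p M * M = l \<cdot>\<^sub>m poly_mat p M"
    using Z unfolding poly_mat_linear_factor(2)[OF M]
    by (subst (asm) minus_mat_eq_0_iff) (use M in auto)
  ultimately show ?thesis using that by blast
qed

section \<open>Deflation and simple eigenvalues\<close>

lemma index_mult_mat_vec_vCons:
  assumes "A \<in> carrier_mat n (Suc m)" and "y \<in> carrier_vec m" and "i < n"
  shows "(A *\<^sub>v vCons c y) $ i = A $$ (i, 0) * c + (\<Sum>t<m. A $$ (i, Suc t) * y $ t)"
  using assms
  by (simp add: scalar_prod_def atLeast0LessThan sum.lessThan_Suc_shift del: sum.lessThan_Suc)

lemma first_basis_vector_change:
  fixes w :: "'a :: field vec"
  assumes w: "w \<in> carrier_vec (Suc m)" and w0: "w $ 0 \<noteq> 0"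
  obtains P Q where "P \<in> carrier_mat (Suc m) (Suc m)" and "Q \<in> carrier_mat (Suc m) (Suc m)"
    and "P * Q = 1\<^sub>m (Suc m)" and "Q * P = 1\<^sub>m (Suc m)"
    and "\<And>c y. y \<in> carrier_vec m \<Longrightarrow> P *\<^sub>v vCons c y = c \<cdot>\<^sub>v w + vCons 0 y"
    and "\<And>y. y \<in> carrier_vec m \<Longrightarrow> Q *\<^sub>v vCons 0 y = vCons 0 y"
proof -
  define P where "P = mat (Suc m) (Suc m) (\<lambda>(i, j). if j = 0 then w $ i else if i = j then 1 else 0)"
  have P: "P \<in> carrier_mat (Suc m) (Suc m)" by (simp add: P_def)
  have P_vCons: "P *\<^sub>v vCons c y = c \<cdot>\<^sub>v w + vCons 0 y" if y: "y \<in> carrier_vec m" for c y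
  proof (rule eq_vecI)
    fix i assume "i < dim_vec (c \<cdot>\<^sub>v w + vCons 0 y)"
    then have i: "i < Suc m" using w y by simp
    have "(P *\<^sub>v vCons c y) $ i = w $ i * c + (\<Sum>t<m. (if i = Suc t then y $ t else 0))"
      using i by (subst index_mult_mat_vec_vCons[OF P y i])
        (simp add: P_def if_distrib[of "\<lambda>x. x * _"] cong: if_cong)
    also have "\<dots> = (c \<cdot>\<^sub>v w + vCons 0 y) $ i"
      using i w y by (cases i) (auto simp: vec_index_vCons)
    finally show "(P *\<^sub>v vCons c y) $ i = (c \<cdot>\<^sub>v w + vCons 0 y) $ i" .
  qed (use P w y in simp)
  have "det P = w $ 0"
    by (subst det_lower_triangular[OF _ P])
      (auto simp: P_def prod_list_diag_prod prod.atLeast0_lessThan_Suc_shift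
        simp del: prod.op_ivl_Suc)
  then have "P \<in> Units (ring_mat TYPE('a) (Suc m) ())"
    using w0 by (intro det_non_zero_imp_unit[OF P]) simp
  then obtain Q where Q: "Q \<in> carrier_mat (Suc m) (Suc m)" and QP: "Q * P = 1\<^sub>m (Suc m)"
    and PQ: "P * Q = 1\<^sub>m (Suc m)"
    unfolding Units_def ring_mat_def by auto
  have "Q *\<^sub>v vCons 0 y = vCons 0 y" if y: "y \<in> carrier_vec m" for y
  proof -
    have "vCons 0 y = P *\<^sub>v vCons 0 y" using P_vCons[OF y, of 0] y w by (auto intro!: eq_vecI)
    then have "Q *\<^sub>v vCons 0 y = (Q * P) *\<^sub>v vCons 0 y"
      using P Q y by (metis assoc_mult_mat_vec vCons_carrier_vec)
    then show ?thesis using QP y by simp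
  qed
  with P Q PQ QP P_vCons show ?thesis using that by blast
qed

lemma char_poly_first_column:
  fixes M :: "'a :: comm_ring_1 mat"
  assumes M: "M \<in> carrier_mat (Suc m) (Suc m)"
    and col0: "\<And>i. i < Suc m \<Longrightarrow> M $$ (i, 0) = (if i = 0 then l else 0)"
  shows "char_poly M = [:-l, 1:] * char_poly (mat m m (\<lambda>(i, j). M $$ (Suc i, Suc j)))"
proof -
  let ?M1 = "mat m m (\<lambda>(i, j). M $$ (Suc i, Suc j))"
  have blocks: "M = four_block_mat (mat 1 1 (\<lambda>_. l)) (mat 1 m (\<lambda>(_, j). M $$ (0, Suc j))) (0\<^sub>m m 1) ?M1"
    by (rule eq_matI) (use M col0 in \<open>auto simp: four_block_mat_def\<close>)
  have "char_poly M = char_poly (mat 1 1 (\<lambda>_. l)) * char_poly ?M1"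
    by (subst blocks, rule char_poly_four_block_zeros_col) auto
  also have "char_poly (mat 1 1 (\<lambda>_. l)) = [:-l, 1:]"
    by (subst char_poly_upper_triangular[of _ 1]) (auto simp: upper_triangular_def diag_mat_def)
  finally show ?thesis .
qed

lemma order_linear_factor_char_poly_eq_1_iff:
  fixes M :: "'a :: field mat"
  assumes "M \<in> carrier_mat m m"
  shows "order l ([:-l, 1:] * char_poly M) = 1 \<longleftrightarrow> \<not> eigenvalue M l"
proof -
  have "char_poly M \<noteq> 0"
    using degree_monic_char_poly[OF assms] by auto
  then have "order l ([:-l, 1:] * char_poly M) = order l [:-l, 1:] + order l (char_poly M)"
    by (intro order_mult) (simp del: mult_pCons_left)
  also have "order l [:-l, 1:] = 1"
    using order_power_n_n[of l 1] by simp
  moreover have "order l (char_poly M) = 0 \<longleftrightarrow> poly (char_poly M) l \<noteq> 0"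
    using \<open>char_poly M \<noteq> 0\<close> order_root[of "char_poly M" l] by auto
  ultimately show ?thesis
    using eigenvalue_root_char_poly[OF assms] by simp
qed

lemma eigenvector_deflation:
  fixes M :: "'a :: field mat"
  assumes M: "M \<in> carrier_mat (Suc m) (Suc m)" and w: "w \<in> carrier_vec (Suc m)"
    and w0: "w $ 0 \<noteq> 0" and Mw: "M *\<^sub>v w = l \<cdot>\<^sub>v w"
  obtains M1 r where "M1 \<in> carrier_mat m m" and "r \<in> carrier_vec m"
    and "order l (char_poly M) = 1 \<longleftrightarrow> \<not> eigenvalue M1 l"
    and "\<And>y. y \<in> carrier_vec m \<Longrightarrow> M *\<^sub>v vCons 0 y = (r \<bullet> y) \<cdot>\<^sub>v w + vCons 0 (M1 *\<^sub>v y)"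
proof -
  obtain P Q where P: "P \<in> carrier_mat (Suc m) (Suc m)" and Q: "Q \<in> carrier_mat (Suc m) (Suc m)"
    and PQ: "P * Q = 1\<^sub>m (Suc m)" and QP: "Q * P = 1\<^sub>m (Suc m)"
    and P_vCons: "\<And>c y. y \<in> carrier_vec m \<Longrightarrow> P *\<^sub>v vCons c y = c \<cdot>\<^sub>v w + vCons 0 y"
    and Q_vCons: "\<And>y. y \<in> carrier_vec m \<Longrightarrow> Q *\<^sub>v vCons 0 y = vCons 0 y"
    using first_basis_vector_change[OF w w0] by blast
  \<comment> \<open>\<open>M' = Q M P\<close> has first column \<open>l e\<^sub>0\<close>, i.e. it is block upper triangular with blocks \<open>l\<close> and \<open>M1\<close>.\<close>
  define M' where "M' = Q * M * P"
  have M': "M' \<in> carrier_mat (Suc m) (Suc m)" using P Q M by (simp add: M'_def)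
  have "M = (P * Q) * M * (P * Q)" using M by (simp add: PQ)
  also have "\<dots> = P * M' * Q"
    using P Q M by (simp add: M'_def assoc_mult_mat[of _ "Suc m" "Suc m" _ "Suc m" _ "Suc m"])
  finally have M_eq: "M = P * M' * Q" .
  have "similar_mat M M'"
    using M M' P Q PQ QP M_eq by (intro similar_matI[where P = P and Q = Q]) auto
  then have cp: "char_poly M = char_poly M'"
    by (rule char_poly_similar)
  let ?e0 = "vCons 1 (0\<^sub>v m)"
  have Pe0: "w = P *\<^sub>v ?e0" using P_vCons[of "0\<^sub>v m" 1] w by (auto intro!: eq_vecI simp: vec_index_vCons)
  have "M' *\<^sub>v ?e0 = Q *\<^sub>v (M *\<^sub>v (P *\<^sub>v ?e0))"
    using P Q M by (simp add: M'_def assoc_mult_mat_vec[of _ "Suc m" "Suc m" _ "Suc m"])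
  also have "\<dots> = Q *\<^sub>v (M *\<^sub>v w)" by (simp only: Pe0)
  also have "\<dots> = l \<cdot>\<^sub>v (Q *\<^sub>v (P *\<^sub>v ?e0))"
    using Q w by (simp add: Mw mult_mat_vec flip: Pe0)
  also have "\<dots> = l \<cdot>\<^sub>v ((Q * P) *\<^sub>v ?e0)"
    using P Q by simp
  also have "\<dots> = vCons l (0\<^sub>v m)" using QP by (auto intro!: eq_vecI simp: vec_index_vCons)
  finally have M'e0: "M' *\<^sub>v ?e0 = vCons l (0\<^sub>v m)" .
  have col0: "M' $$ (i, 0) = (if i = 0 then l else 0)" if "i < Suc m" for i
  proof -
    have "M' $$ (i, 0) = (M' *\<^sub>v ?e0) $ i"
      using index_mult_mat_vec_vCons[OF M' _ that, of "0\<^sub>v m" 1] by simp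
    then show ?thesis using M'e0 that by (simp add: vec_index_vCons)
  qed
  define M1 where "M1 = mat m m (\<lambda>(i, j). M' $$ (Suc i, Suc j))"
  define r where "r = vec m (\<lambda>j. M' $$ (0, Suc j))"
  have M1: "M1 \<in> carrier_mat m m" and r: "r \<in> carrier_vec m" by (simp_all add: M1_def r_def)
  have "char_poly M = [:-l, 1:] * char_poly M1"
    unfolding cp M1_def by (rule char_poly_first_column[OF M' col0])
  then have "order l (char_poly M) = 1 \<longleftrightarrow> \<not> eigenvalue M1 l"
    using order_linear_factor_char_poly_eq_1_iff[OF M1] by (simp only:)
  moreover have "M *\<^sub>v vCons 0 y = (r \<bullet> y) \<cdot>\<^sub>v w + vCons 0 (M1 *\<^sub>v y)" if y: "y \<in> carrier_vec m" for y
  proof -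
    have "M' *\<^sub>v vCons 0 y = vCons (r \<bullet> y) (M1 *\<^sub>v y)"
    proof (rule eq_vecI)
      fix i assume "i < dim_vec (vCons (r \<bullet> y) (M1 *\<^sub>v y))"
      then have i: "i < Suc m" using M1 by simp
      then show "(M' *\<^sub>v vCons 0 y) $ i = vCons (r \<bullet> y) (M1 *\<^sub>v y) $ i"
        using M' y
        by (subst index_mult_mat_vec_vCons[OF M' y i], cases i)
          (auto simp: M1_def r_def scalar_prod_def atLeast0LessThan)
    qed (use M' M1 y in simp)
    moreover have "M *\<^sub>v vCons 0 y = P *\<^sub>v (M' *\<^sub>v (Q *\<^sub>v vCons 0 y))"
      using M_eq P M' Q y by (simp add: assoc_mult_mat_vec[of _ "Suc m" "Suc m" _ "Suc m"])
    ultimately show ?thesis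
      using y M1 by (simp add: Q_vCons P_vCons)
  qed
  ultimately show ?thesis using that M1 r by blast
qed

lemma simple_eigenvalue_eigenspace_line:
  fixes M :: "'a :: field mat"
  assumes M: "M \<in> carrier_mat (Suc m) (Suc m)" and w: "w \<in> carrier_vec (Suc m)"
    and w0: "w $ 0 \<noteq> 0" and Mw: "M *\<^sub>v w = l \<cdot>\<^sub>v w" and simple: "order l (char_poly M) = 1"
    and x: "x \<in> carrier_vec (Suc m)" and Mx: "M *\<^sub>v x = l \<cdot>\<^sub>v x"
  shows "\<exists>c. x = c \<cdot>\<^sub>v w"
proof -
  obtain M1 r where M1: "M1 \<in> carrier_mat m m" and r: "r \<in> carrier_vec m"
    and not_eigenvalue: "\<not> eigenvalue M1 l"
    and M_vCons: "\<And>y. y \<in> carrier_vec m \<Longrightarrow> M *\<^sub>v vCons 0 y = (r \<bullet> y) \<cdot>\<^sub>v w + vCons 0 (M1 *\<^sub>v y)"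
    using eigenvector_deflation[OF M w w0 Mw] simple by metis
  define c where "c = x $ 0 / w $ 0"
  define y where "y = vec m (\<lambda>i. (x - c \<cdot>\<^sub>v w) $ Suc i)"
  have y: "y \<in> carrier_vec m" by (simp add: y_def)
  have xy: "x - c \<cdot>\<^sub>v w = vCons 0 y"
    using x w w0 by (auto simp: y_def c_def vec_index_vCons intro!: eq_vecI)
  have "M *\<^sub>v (x - c \<cdot>\<^sub>v w) = l \<cdot>\<^sub>v (x - c \<cdot>\<^sub>v w)"
    using M x w Mx Mw
    by (intro eq_vecI) (auto simp: mult_minus_distrib_mat_vec mult_mat_vec algebra_simps)
  then have eq: "(r \<bullet> y) \<cdot>\<^sub>v w + vCons 0 (M1 *\<^sub>v y) = vCons 0 (l \<cdot>\<^sub>v y)"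
    unfolding xy M_vCons[OF y] by (auto intro!: eq_vecI simp: vec_index_vCons)
  have ry: "r \<bullet> y = 0"
    using arg_cong[OF eq, of "\<lambda>v. v $ 0"] w w0 by simp
  have M1y: "M1 *\<^sub>v y = l \<cdot>\<^sub>v y"
  proof (rule eq_vecI)
    fix i assume "i < dim_vec (l \<cdot>\<^sub>v y)"
    then show "(M1 *\<^sub>v y) $ i = (l \<cdot>\<^sub>v y) $ i"
      using arg_cong[OF eq, of "\<lambda>v. v $ Suc i"] w M1 y ry by simp
  qed (use M1 y in simp)
  have "y = 0\<^sub>v m"
  proof (rule ccontr)
    assume "y \<noteq> 0\<^sub>v m"
    then have "eigenvector M1 y l" using y M1 M1y by (auto simp: eigenvector_def)
    then show False using not_eigenvalue by (auto simp: eigenvalue_def)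
  qed
  then have x_minus: "x - c \<cdot>\<^sub>v w = 0\<^sub>v (Suc m)"
    by (simp add: xy zero_vec_Suc)
  have "x = c \<cdot>\<^sub>v w"
  proof (rule eq_vecI)
    fix i assume "i < dim_vec (c \<cdot>\<^sub>v w)"
    then show "x $ i = (c \<cdot>\<^sub>v w) $ i"
      using arg_cong[OF x_minus, of "\<lambda>v. v $ i"] x w by simp
  qed (use x w in simp)
  then show ?thesis ..
qed

lemma order_char_poly_eq_1I:
  fixes M :: "'a :: field mat"
  assumes M: "M \<in> carrier_mat (Suc m) (Suc m)" and w: "w \<in> carrier_vec (Suc m)"
    and w0: "w $ 0 \<noteq> 0" and Mw: "M *\<^sub>v w = l \<cdot>\<^sub>v w"
    and z: "z \<in> carrier_vec (Suc m)" and zM: "transpose_mat M *\<^sub>v z = l \<cdot>\<^sub>v z" and zw: "z \<bullet> w \<noteq> 0"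
    and line: "\<And>x. x \<in> carrier_vec (Suc m) \<Longrightarrow> M *\<^sub>v x = l \<cdot>\<^sub>v x \<Longrightarrow> \<exists>c. x = c \<cdot>\<^sub>v w"
  shows "order l (char_poly M) = 1"
proof -
  obtain M1 r where M1: "M1 \<in> carrier_mat m m" and r: "r \<in> carrier_vec m"
    and simple_iff: "order l (char_poly M) = 1 \<longleftrightarrow> \<not> eigenvalue M1 l"
    and M_vCons: "\<And>y. y \<in> carrier_vec m \<Longrightarrow> M *\<^sub>v vCons 0 y = (r \<bullet> y) \<cdot>\<^sub>v w + vCons 0 (M1 *\<^sub>v y)"
    using eigenvector_deflation[OF M w w0 Mw] by metis
  have "\<not> eigenvalue M1 l"
  proof
    assume "eigenvalue M1 l"
    then obtain y where y: "y \<in> carrier_vec m" "y \<noteq> 0\<^sub>v m" and M1y: "M1 *\<^sub>v y = l \<cdot>\<^sub>v y"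
      using M1 by (auto simp: eigenvalue_def eigenvector_def)
    let ?x = "vCons 0 y"
    have x: "?x \<in> carrier_vec (Suc m)" using y by simp
    have Mx: "M *\<^sub>v ?x = (r \<bullet> y) \<cdot>\<^sub>v w + l \<cdot>\<^sub>v ?x"
      using M_vCons[OF y(1)] M1y y w by (auto intro!: eq_vecI simp: vec_index_vCons)
    have "l * (z \<bullet> ?x) = z \<bullet> (M *\<^sub>v ?x)"
      using transpose_vec_mult_scalar[OF M x z] zM z x by simp
    also have "\<dots> = (r \<bullet> y) * (z \<bullet> w) + l * (z \<bullet> ?x)"
      unfolding Mx using z w x by (simp add: scalar_prod_add_distrib[of _ "Suc m"])
    finally have "r \<bullet> y = 0" using zw by simp
    then have "M *\<^sub>v ?x = l \<cdot>\<^sub>v ?x" using Mx w x by (auto intro!: eq_vecI)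
    then obtain c where c: "?x = c \<cdot>\<^sub>v w" using line x by blast
    have "0 = c * w $ 0" using arg_cong[OF c, of "\<lambda>v. v $ 0"] w by simp
    then have "c = 0" using w0 by simp
    then have "?x = 0\<^sub>v (Suc m)" using c w by (auto intro!: eq_vecI)
    then show False using y(2) by (simp add: zero_vec_Suc)
  qed
  then show ?thesis using simple_iff by simp
qed

section \<open>Positive eigenvectors of a simple eigenvalue\<close>

lemma col_eigenvector_if_mult_eq:
  assumes "M \<in> carrier_mat n n" and "F \<in> carrier_mat n nc" and "M * F = l \<cdot>\<^sub>m F" and "j < nc"
  shows "M *\<^sub>v col F j = l \<cdot>\<^sub>v col F j"
proof -
  have "M *\<^sub>v col F j = col (M * F) j" using assms(1,2,4) by (rule col_mult2[symmetric])
  also have "\<dots> = col (l \<cdot>\<^sub>m F) j" by (simp only: assms(3))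
  also have "\<dots> = l \<cdot>\<^sub>v col F j" using assms by (intro eq_vecI) auto
  finally show ?thesis .
qed

lemma two_sided_eigen_mat_rank_one:
  fixes F M :: "'a :: field mat"
  assumes F: "F \<in> carrier_mat n n" and M: "M \<in> carrier_mat n n"
    and MF: "M * F = l \<cdot>\<^sub>m F" and FM: "F * M = l \<cdot>\<^sub>m F"
    and right: "\<And>x. x \<in> carrier_vec n \<Longrightarrow> M *\<^sub>v x = l \<cdot>\<^sub>v x \<Longrightarrow> \<exists>c. x = c \<cdot>\<^sub>v w"
    and left: "\<And>x. x \<in> carrier_vec n \<Longrightarrow> transpose_mat M *\<^sub>v x = l \<cdot>\<^sub>v x \<Longrightarrow> \<exists>c. x = c \<cdot>\<^sub>v z"
    and w: "w \<in> carrier_vec n" and z: "z \<in> carrier_vec n" and z0: "z $ 0 \<noteq> 0"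
  obtains c where "\<And>i j. i < n \<Longrightarrow> j < n \<Longrightarrow> F $$ (i, j) = c * (w $ i * z $ j)"
proof -
  have "\<exists>c. col F j = c \<cdot>\<^sub>v w" if "j < n" for j
    using F M MF that by (intro right col_eigenvector_if_mult_eq) auto
  then obtain c where c: "\<And>j. j < n \<Longrightarrow> col F j = c j \<cdot>\<^sub>v w" by metis
  have "transpose_mat M * transpose_mat F = transpose_mat (l \<cdot>\<^sub>m F)"
    using F M FM by (simp add: transpose_mult[symmetric])
  also have "\<dots> = l \<cdot>\<^sub>m transpose_mat F" by (intro eq_matI) auto
  finally have "transpose_mat M * transpose_mat F = l \<cdot>\<^sub>m transpose_mat F" .
  then have "\<exists>d. col (transpose_mat F) i = d \<cdot>\<^sub>v z" if "i < n" for i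
    using F M that by (intro left col_eigenvector_if_mult_eq) auto
  then obtain d where d: "\<And>i. i < n \<Longrightarrow> row F i = d i \<cdot>\<^sub>v z"
    using F by (metis carrier_matD(1) col_transpose)
  have F_col: "F $$ (i, j) = c j * w $ i" and F_row: "F $$ (i, j) = d i * z $ j"
    if "i < n" "j < n" for i j
    using that F w z arg_cong[OF c[of j], of "\<lambda>x. x $ i"] arg_cong[OF d[of i], of "\<lambda>x. x $ j"]
    by auto
  have "F $$ (i, j) = c 0 / z $ 0 * (w $ i * z $ j)" if "i < n" "j < n" for i j
  proof -
    have "d i = c 0 * w $ i / z $ 0"
      using F_col[of i 0] F_row[of i 0] that z0 by (simp add: field_simps)
    then show ?thesis using F_row[OF that] by simp
  qed
  then show ?thesis using that by blast
qed

lemma algebraically_positiveI: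
  fixes M :: "real mat"
  assumes M: "M \<in> carrier_mat (Suc m) (Suc m)"
    and w: "w \<in> carrier_vec (Suc m)" and w_pos: "\<And>i. i < Suc m \<Longrightarrow> w $ i > 0"
    and z: "z \<in> carrier_vec (Suc m)" and z_pos: "\<And>i. i < Suc m \<Longrightarrow> z $ i > 0"
    and Mw: "M *\<^sub>v w = l \<cdot>\<^sub>v w" and zM: "transpose_mat M *\<^sub>v z = l \<cdot>\<^sub>v z"
    and simple: "order l (char_poly M) = 1"
  shows "algebraically_positive M"
proof -
  have w0: "w $ 0 \<noteq> 0" and z0: "z $ 0 \<noteq> 0"
    using w_pos[of 0] z_pos[of 0] by auto
  have MT: "transpose_mat M \<in> carrier_mat (Suc m) (Suc m)" using M by simp
  have "eigenvector M w l"
    using M w w0 Mw by (auto simp: eigenvector_def)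
  then obtain p where F0: "poly_mat p M \<noteq> 0\<^sub>m (Suc m) (Suc m)"
    and MF: "M * poly_mat p M = l \<cdot>\<^sub>m poly_mat p M" and FM: "poly_mat p M * M = l \<cdot>\<^sub>m poly_mat p M"
    using poly_mat_two_sided_eigen_exists[OF M] by blast
  obtain c where F: "\<And>i j. i < Suc m \<Longrightarrow> j < Suc m \<Longrightarrow> poly_mat p M $$ (i, j) = c * (w $ i * z $ j)"
    using two_sided_eigen_mat_rank_one[OF _ M MF FM _ _ w z z0]
      simple_eigenvalue_eigenspace_line[OF M w w0 Mw simple]
      simple_eigenvalue_eigenspace_line[OF MT z z0 zM] simple M
    by auto
  have "c \<noteq> 0"
  proof
    assume "c = 0"
    then have "poly_mat p M = 0\<^sub>m (Suc m) (Suc m)"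
      using F M by (intro eq_matI) auto
    then show False using F0 by contradiction
  qed
  have "poly_mat (Polynomial.smult (1 / c) p) M $$ (i, j) > 0" if "i < Suc m" "j < Suc m" for i j
    using that M F \<open>c \<noteq> 0\<close> w_pos z_pos by (simp add: poly_mat_smult)
  then show ?thesis
    using algebraically_positive_iff_poly_mat[OF M] by blast
qed

section \<open>Row vectors and matrices indexed from 1\<close>

lemma left_eigenvector_iff_transpose:
  fixes M :: "'a :: comm_ring mat"
  assumes M: "M \<in> carrier_mat n n" and z: "z \<in> carrier_vec n"
  shows "mat_of_rows n [z] * M = l \<cdot>\<^sub>m mat_of_rows n [z] \<longleftrightarrow> transpose_mat M *\<^sub>v z = l \<cdot>\<^sub>v z"
proof -
  have "mat_of_rows n [z] * M = mat_of_rows n [transpose_mat M *\<^sub>v z]"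
    using M z by (intro eq_matI) (auto simp: mat_of_rows_index comm_scalar_prod[of _ n])
  moreover have "l \<cdot>\<^sub>m mat_of_rows n [z] = mat_of_rows n [l \<cdot>\<^sub>v z]"
    using z by (intro eq_matI) (auto simp: mat_of_rows_index)
  moreover have "mat_of_rows n [x] = mat_of_rows n [y] \<longleftrightarrow> x = y"
    if "x \<in> carrier_vec n" "y \<in> carrier_vec n" for x y :: "'a vec"
  proof -
    have "row (mat_of_rows n [x]) 0 = x" "row (mat_of_rows n [y]) 0 = y"
      using that by simp_all
    then show ?thesis by metis
  qed
  ultimately show ?thesis using M z by simp
qed

lemma mat_of_1_cong:
  assumes "\<And>p q. p \<in> {1..N} \<Longrightarrow> q \<in> {1..N} \<Longrightarrow> b p q = b' p q"
  shows "mat_of_1 N b = mat_of_1 N b'"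
  using assms by (intro eq_matI) (auto simp: mat_of_1_def)

lemma mat_of_1_mult_vec_of_1:
  "mat_of_1 N b *\<^sub>v vec_of_1 N x = vec_of_1 N (\<lambda>p. \<Sum>q = 1..N. b p q * x q)"
  by (intro eq_vecI)
    (auto simp: mat_of_1_def vec_of_1_def scalar_prod_def atLeast0LessThan sum.atLeast1_atMost_eq)

lemma transpose_mat_of_1_mult_vec_of_1:
  "transpose_mat (mat_of_1 N b) *\<^sub>v vec_of_1 N z = vec_of_1 N (\<lambda>q. \<Sum>p = 1..N. z p * b p q)"
  by (intro eq_vecI)
    (auto simp: mat_of_1_def vec_of_1_def scalar_prod_def atLeast0LessThan sum.atLeast1_atMost_eq mult.commute)

lemma smult_vec_of_1: "c \<cdot>\<^sub>v vec_of_1 N x = vec_of_1 N (\<lambda>p. c * x p)"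
  by (intro eq_vecI) (auto simp: vec_of_1_def)

lemma vec_of_1_eq_iff: "vec_of_1 N x = vec_of_1 N y \<longleftrightarrow> (\<forall>p \<in> {1..N}. x p = y p)"
proof
  assume eq: "vec_of_1 N x = vec_of_1 N y"
  have shifted: "x (i + 1) = y (i + 1)" if "i < N" for i
    using that arg_cong[OF eq, of "\<lambda>v. v $ i"] by (simp add: vec_of_1_def)
  show "\<forall>p \<in> {1..N}. x p = y p"
  proof
    fix p assume "p \<in> {1..N}"
    then have "p - 1 < N" and "p = p - 1 + 1" by auto
    then show "x p = y p" using shifted by metis
  qed
qed (auto simp: vec_of_1_def intro!: eq_vecI)

lemma vec_eq_vec_of_1: "x \<in> carrier_vec N \<Longrightarrow> x = vec_of_1 N (\<lambda>p. x $ (p - 1))"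
  by (intro eq_vecI) (auto simp: vec_of_1_def)

section \<open>Expanding the first index of a matrix\<close>

lemma sum_split_at:
  fixes k n :: nat
  assumes "1 \<le> k" and "1 \<le> n"
  shows "(\<Sum>q = 1..k + n - 1. f q) = (\<Sum>q = 1..k. f q) + (\<Sum>i = 1..n - 1. f (k + i))"
proof -
  have "(\<Sum>q = 1..k + (n - 1). f q) = (\<Sum>q = 1..k. f q) + (\<Sum>q = k + 1..k + (n - 1). f q)"
    using assms by (intro sum.ub_add_nat) auto
  also have "(\<Sum>q = k + 1..k + (n - 1). f q) = (\<Sum>i = 1..n - 1. f (k + i))"
    using sum.shift_bounds_cl_nat_ivl[of f 1 k "n - 1"] by (simp add: add.commute)
  finally show ?thesis using assms by simp
qed

lemma sum_split_last:
  fixes k :: nat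
  assumes "1 \<le> k"
  shows "(\<Sum>q = 1..k. f q) = (\<Sum>q = 1..k - 1. f q) + f k"
proof -
  have "{1..k} = insert k {1..k - 1}" using assms by auto
  then show ?thesis using assms by (simp add: add.commute)
qed

lemma sum_split_first:
  fixes n :: nat
  assumes "1 \<le> n"
  shows "(\<Sum>t<n. f t) = f 0 + (\<Sum>i = 1..n - 1. f i)"
proof -
  have "{..<n} = insert 0 {1..n - 1}" using assms by auto
  then show ?thesis by simp
qed

text \<open>All three matrices \<open>B\<close> of the theorem have this shape (entries indexed from 1): the first
  index of \<open>A\<close> is replaced by the indices \<open>1, \<dots>, k\<close>; rows \<open>1, \<dots>, k - 1\<close> are \<open>T\<close> on the new
  block, row \<open>k\<close> is \<open>R\<close> on it followed by the rest of the first row of \<open>A\<close>, and the rest of the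
  first column of \<open>A\<close> is attached to column \<open>s\<close>.\<close>

definition expansion_entry ::
  "real mat \<Rightarrow> nat \<Rightarrow> nat \<Rightarrow> (nat \<Rightarrow> nat \<Rightarrow> real) \<Rightarrow> (nat \<Rightarrow> real) \<Rightarrow> nat \<Rightarrow> nat \<Rightarrow> real" where
  "expansion_entry A k s T R p q =
    (if p < k then (if q \<le> k then T p q else 0)
     else if p = k then (if q \<le> k then R q else A $$ (0, q - k))
     else if q = s then A $$ (p - k, 0) else if q \<le> k then 0 else A $$ (p - k, q - k))"

context
  fixes A :: "real mat" and n k s :: nat and T :: "nat \<Rightarrow> nat \<Rightarrow> real" and R :: "nat \<Rightarrow> real"
  assumes n: "1 \<le> n" and k: "1 \<le> k" and s: "s \<in> {1..k}"
begin

lemma expansion_row_new: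
  assumes p: "p \<in> {1..k - 1}"
  shows "(\<Sum>q = 1..k + n - 1. expansion_entry A k s T R p q * x q) = (\<Sum>q = 1..k. T p q * x q)"
proof -
  have "(\<Sum>q = 1..k. expansion_entry A k s T R p q * x q) = (\<Sum>q = 1..k. T p q * x q)"
    using p by (intro sum.cong) (auto simp: expansion_entry_def)
  moreover have "(\<Sum>i = 1..n - 1. expansion_entry A k s T R p (k + i) * x (k + i)) = 0"
    using p by (intro sum.neutral) (auto simp: expansion_entry_def)
  ultimately show ?thesis unfolding sum_split_at[OF k n] by simp
qed

lemma expansion_row_k:
  "(\<Sum>q = 1..k + n - 1. expansion_entry A k s T R k q * x q)
    = (\<Sum>q = 1..k. R q * x q) + (\<Sum>i = 1..n - 1. A $$ (0, i) * x (k + i))"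
proof -
  have "(\<Sum>q = 1..k. expansion_entry A k s T R k q * x q) = (\<Sum>q = 1..k. R q * x q)"
    by (intro sum.cong) (auto simp: expansion_entry_def)
  moreover have "(\<Sum>i = 1..n - 1. expansion_entry A k s T R k (k + i) * x (k + i))
      = (\<Sum>i = 1..n - 1. A $$ (0, i) * x (k + i))"
    by (intro sum.cong) (auto simp: expansion_entry_def)
  ultimately show ?thesis unfolding sum_split_at[OF k n] by simp
qed

lemma expansion_row_old:
  assumes i: "i \<in> {1..n - 1}"
  shows "(\<Sum>q = 1..k + n - 1. expansion_entry A k s T R (k + i) q * x q)
    = A $$ (i, 0) * x s + (\<Sum>j = 1..n - 1. A $$ (i, j) * x (k + j))"
proof -
  have "(\<Sum>q = 1..k. expansion_entry A k s T R (k + i) q * x q)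
      = (\<Sum>q = 1..k. if q = s then A $$ (i, 0) * x q else 0)"
    using i by (intro sum.cong) (auto simp: expansion_entry_def)
  also have "\<dots> = A $$ (i, 0) * x s" using s by simp
  moreover have "(\<Sum>j = 1..n - 1. expansion_entry A k s T R (k + i) (k + j) * x (k + j))
      = (\<Sum>j = 1..n - 1. A $$ (i, j) * x (k + j))"
    using i s by (intro sum.cong) (auto simp: expansion_entry_def)
  ultimately show ?thesis unfolding sum_split_at[OF k n] by simp
qed

lemma expansion_col_new:
  assumes q: "q \<in> {1..k}"
  shows "(\<Sum>p = 1..k + n - 1. z p * expansion_entry A k s T R p q)
    = (\<Sum>p = 1..k - 1. z p * T p q) + z k * R q
      + (if q = s then (\<Sum>i = 1..n - 1. z (k + i) * A $$ (i, 0)) else 0)"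
proof -
  have "(\<Sum>p = 1..k - 1. z p * expansion_entry A k s T R p q) = (\<Sum>p = 1..k - 1. z p * T p q)"
    using q by (intro sum.cong) (auto simp: expansion_entry_def)
  moreover have "expansion_entry A k s T R k q = R q"
    using q by (simp add: expansion_entry_def)
  moreover have "(\<Sum>i = 1..n - 1. z (k + i) * expansion_entry A k s T R (k + i) q)
      = (if q = s then (\<Sum>i = 1..n - 1. z (k + i) * A $$ (i, 0)) else 0)"
    using q by (auto simp: expansion_entry_def intro!: sum.cong sum.neutral)
  ultimately show ?thesis unfolding sum_split_at[OF k n] sum_split_last[OF k] by simp
qed

lemma expansion_col_old:
  assumes j: "j \<in> {1..n - 1}"
  shows "(\<Sum>p = 1..k + n - 1. z p * expansion_entry A k s T R p (k + j))
    = z k * A $$ (0, j) + (\<Sum>i = 1..n - 1. z (k + i) * A $$ (i, j))"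
proof -
  have "(\<Sum>p = 1..k - 1. z p * expansion_entry A k s T R p (k + j)) = 0"
    using j by (intro sum.neutral) (auto simp: expansion_entry_def)
  moreover have "expansion_entry A k s T R k (k + j) = A $$ (0, j)"
    using j by (simp add: expansion_entry_def)
  moreover have "(\<Sum>i = 1..n - 1. z (k + i) * expansion_entry A k s T R (k + i) (k + j))
      = (\<Sum>i = 1..n - 1. z (k + i) * A $$ (i, j))"
    using j s by (intro sum.cong) (auto simp: expansion_entry_def)
  ultimately show ?thesis unfolding sum_split_at[OF k n] sum_split_last[OF k] by simp
qed

end

locale positive_simple_eigenvalue =
  fixes A :: "real mat" and n :: nat and l :: real and u v :: "real vec"
  assumes n: "1 \<le> n" and A: "A \<in> carrier_mat n n" and a11_pos: "A $$ (0, 0) > 0"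
    and l_pos: "l > 0" and simple: "order l (char_poly A) = 1"
    and u: "u \<in> carrier_vec n" and u_pos: "\<And>i. i < n \<Longrightarrow> u $ i > 0"
    and v: "v \<in> carrier_vec n" and v_pos: "\<And>i. i < n \<Longrightarrow> v $ i > 0"
    and Au: "A *\<^sub>v u = l \<cdot>\<^sub>v u" and vA: "transpose_mat A *\<^sub>v v = l \<cdot>\<^sub>v v"
begin

lemma A_row_u: "i < n \<Longrightarrow> (\<Sum>t<n. A $$ (i, t) * u $ t) = l * u $ i"
  using arg_cong[OF Au, of "\<lambda>x. x $ i"] A u by (simp add: scalar_prod_def atLeast0LessThan)

lemma A_col_v: "j < n \<Longrightarrow> (\<Sum>t<n. v $ t * A $$ (t, j)) = l * v $ j"
  using arg_cong[OF vA, of "\<lambda>x. x $ j"] A v by (simp add: scalar_prod_def atLeast0LessThan mult.commute)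

lemma first_column_weight: "(\<Sum>i = 1..n - 1. v $ i * A $$ (i, 0)) = (l - A $$ (0, 0)) * v $ 0"
  using A_col_v[of 0] sum_split_first[OF n, of "\<lambda>i. v $ i * A $$ (i, 0)"] n by (simp add: algebra_simps)

context
  fixes k s :: nat and T :: "nat \<Rightarrow> nat \<Rightarrow> real" and R :: "nat \<Rightarrow> real"
  assumes k: "1 \<le> k" and s: "s \<in> {1..k}"
begin

lemma expansion_right_eigenvector:
  assumes T_rows: "\<And>p. p \<in> {1..k - 1} \<Longrightarrow> (\<Sum>q = 1..k. T p q) = l"
    and R_sum: "(\<Sum>q = 1..k. R q) = A $$ (0, 0)"
  shows "mat_of_1 (k + n - 1) (expansion_entry A k s T R) *\<^sub>v vec_of_1 (k + n - 1) (wvec u k)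
    = l \<cdot>\<^sub>v vec_of_1 (k + n - 1) (wvec u k)"
proof -
  let ?W = "wvec u k"
  have W_new: "?W q = u $ 0" if "q \<le> k" for q using that by (simp add: wvec_def)
  have W_old: "?W (k + i) = u $ i" for i using k by (auto simp: wvec_def)
  have "(\<Sum>q = 1..k + n - 1. expansion_entry A k s T R p q * ?W q) = l * ?W p"
    if p: "p \<in> {1..k + n - 1}" for p
  proof -
    consider "p < k" | "p = k" | "k < p" by linarith
    then show ?thesis
    proof cases
      case 1
      then have p': "p \<in> {1..k - 1}" using p by auto
      have "(\<Sum>q = 1..k. T p q * ?W q) = (\<Sum>q = 1..k. T p q) * u $ 0"
        using W_new by (simp add: sum_distrib_right)
      then show ?thesis
        unfolding expansion_row_new[OF n k s p'] using T_rows[OF p'] W_new[of p] 1 by simp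
    next
      case 2
      have "(\<Sum>q = 1..k. R q * ?W q) + (\<Sum>i = 1..n - 1. A $$ (0, i) * ?W (k + i))
          = (\<Sum>t<n. A $$ (0, t) * u $ t)"
        using R_sum W_new W_old sum_split_first[OF n, of "\<lambda>t. A $$ (0, t) * u $ t"]
        by (simp add: sum_distrib_right[symmetric])
      then show ?thesis
        unfolding 2 expansion_row_k[OF n k s] using A_row_u[of 0] n W_new[of k] by simp
    next
      case 3
      define i where "i = p - k"
      have i: "i \<in> {1..n - 1}" and p_eq: "p = k + i" using 3 p by (auto simp: i_def)
      have "A $$ (i, 0) * ?W s + (\<Sum>j = 1..n - 1. A $$ (i, j) * ?W (k + j))
          = (\<Sum>t<n. A $$ (i, t) * u $ t)"
        using s W_new W_old sum_split_first[OF n, of "\<lambda>t. A $$ (i, t) * u $ t"] by simp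
      then show ?thesis
        unfolding p_eq expansion_row_old[OF n k s i] using A_row_u[of i] i W_old by auto
    qed
  qed
  then show ?thesis
    by (simp add: mat_of_1_mult_vec_of_1 smult_vec_of_1 vec_of_1_eq_iff)
qed

lemma expansion_left_eigenvector:
  assumes Z_old: "\<And>i. Z (k + i) = v $ i"
    and Z_new: "\<And>q. q \<in> {1..k} \<Longrightarrow> (\<Sum>p = 1..k - 1. Z p * T p q) + v $ 0 * R q
        + (if q = s then (l - A $$ (0, 0)) * v $ 0 else 0) = l * Z q"
  shows "transpose_mat (mat_of_1 (k + n - 1) (expansion_entry A k s T R)) *\<^sub>v vec_of_1 (k + n - 1) Z
    = l \<cdot>\<^sub>v vec_of_1 (k + n - 1) Z"
proof -
  have Z_k: "Z k = v $ 0" using Z_old[of 0] by simp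
  have "(\<Sum>p = 1..k + n - 1. Z p * expansion_entry A k s T R p q) = l * Z q"
    if q: "q \<in> {1..k + n - 1}" for q
  proof (cases "q \<le> k")
    case True
    then have q': "q \<in> {1..k}" using q by simp
    show ?thesis
      unfolding expansion_col_new[OF n k s q'] Z_old first_column_weight using Z_new[OF q']
      by (simp add: Z_k)
  next
    case False
    define j where "j = q - k"
    have j: "j \<in> {1..n - 1}" and q_eq: "q = k + j" using False q by (auto simp: j_def)
    have "Z k * A $$ (0, j) + (\<Sum>i = 1..n - 1. Z (k + i) * A $$ (i, j)) = (\<Sum>t<n. v $ t * A $$ (t, j))"
      using sum_split_first[OF n, of "\<lambda>t. v $ t * A $$ (t, j)"] by (simp add: Z_old Z_k)
    then show ?thesis
      unfolding q_eq expansion_col_old[OF n k s j] using A_col_v[of j] j Z_old by auto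
  qed
  then show ?thesis
    by (simp add: transpose_mat_of_1_mult_vec_of_1 smult_vec_of_1 vec_of_1_eq_iff)
qed

lemma expansion_eigenvector_tail:
  assumes R_sum: "(\<Sum>q = 1..k. R q) = A $$ (0, 0)"
    and X_new: "\<And>q. q \<in> {1..k} \<Longrightarrow> X q = X k"
    and rows: "\<And>p. p \<in> {1..k + n - 1} \<Longrightarrow>
      (\<Sum>q = 1..k + n - 1. expansion_entry A k s T R p q * X q) = l * X p"
  shows "A *\<^sub>v vec n (\<lambda>i. X (k + i)) = l \<cdot>\<^sub>v vec n (\<lambda>i. X (k + i))"
proof (rule eq_vecI)
  fix i assume "i < dim_vec (l \<cdot>\<^sub>v vec n (\<lambda>i. X (k + i)))"
  then have i: "i < n" by simp
  have "(A *\<^sub>v vec n (\<lambda>i. X (k + i))) $ i = A $$ (i, 0) * X k + (\<Sum>j = 1..n - 1. A $$ (i, j) * X (k + j))"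
    using i A sum_split_first[OF n, of "\<lambda>t. A $$ (i, t) * X (k + t)"]
    by (simp add: scalar_prod_def atLeast0LessThan)
  also have "\<dots> = l * X (k + i)"
  proof (cases "i = 0")
    case True
    have "(\<Sum>q = 1..k. R q * X q) = (\<Sum>q = 1..k. R q) * X k"
      unfolding sum_distrib_right
    proof (rule sum.cong)
      fix q assume "q \<in> {1..k}"
      then show "R q * X q = R q * X k" using X_new[of q] by simp
    qed simp
    then show ?thesis
      using rows[of k] k n True R_sum unfolding expansion_row_k[OF n k s] by simp
  next
    case False
    then have i': "i \<in> {1..n - 1}" using i by simp
    have "k + i \<in> {1..k + n - 1}" using i' by auto
    from rows[OF this] show ?thesis
      unfolding expansion_row_old[OF n k s i'] X_new[OF s] .
  qed
  finally show "(A *\<^sub>v vec n (\<lambda>i. X (k + i))) $ i = (l \<cdot>\<^sub>v vec n (\<lambda>i. X (k + i))) $ i"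
    using i by simp
qed (use A in simp)

lemma expansion_eigenspace_line:
  assumes R_sum: "(\<Sum>q = 1..k. R q) = A $$ (0, 0)"
    and T_const: "\<And>x. (\<And>p. p \<in> {1..k - 1} \<Longrightarrow> (\<Sum>q = 1..k. T p q * x q) = l * x p)
      \<Longrightarrow> (\<And>q. q \<in> {1..k} \<Longrightarrow> x q = x k)"
    and x: "x \<in> carrier_vec (k + n - 1)"
    and Bx: "mat_of_1 (k + n - 1) (expansion_entry A k s T R) *\<^sub>v x = l \<cdot>\<^sub>v x"
  shows "\<exists>c. x = c \<cdot>\<^sub>v vec_of_1 (k + n - 1) (wvec u k)"
proof -
  define X where "X p = x $ (p - 1)" for p
  have x_eq: "x = vec_of_1 (k + n - 1) X"
    unfolding X_def using x by (rule vec_eq_vec_of_1)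
  have "vec_of_1 (k + n - 1) (\<lambda>p. \<Sum>q = 1..k + n - 1. expansion_entry A k s T R p q * X q)
      = vec_of_1 (k + n - 1) (\<lambda>p. l * X p)"
    using Bx unfolding x_eq mat_of_1_mult_vec_of_1 smult_vec_of_1 .
  then have rows: "(\<Sum>q = 1..k + n - 1. expansion_entry A k s T R p q * X q) = l * X p"
    if "p \<in> {1..k + n - 1}" for p
    using that unfolding vec_of_1_eq_iff by (rule bspec)
  have X_new: "X q = X k" if "q \<in> {1..k}" for q
  proof (rule T_const[OF _ that])
    fix p assume p: "p \<in> {1..k - 1}"
    then have "p \<in> {1..k + n - 1}" by auto
    from rows[OF this] show "(\<Sum>q = 1..k. T p q * X q) = l * X p"
      unfolding expansion_row_new[OF n k s p] .
  qed
  define y where "y = vec n (\<lambda>i. X (k + i))"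
  obtain n' where n': "n = Suc n'" using n by (cases n) auto
  have "A *\<^sub>v y = l \<cdot>\<^sub>v y"
    unfolding y_def using R_sum X_new rows by (rule expansion_eigenvector_tail)
  then obtain c where c: "y = c \<cdot>\<^sub>v u"
    using simple_eigenvalue_eigenspace_line[of A n' u l y] A u u_pos[of 0] Au simple
    unfolding n' y_def by fastforce
  have "X p = c * wvec u k p" if "p \<in> {1..k + n - 1}" for p
  proof (cases "p \<le> k")
    case True
    then have "X p = y $ 0" using X_new[of p] that n by (simp add: y_def)
    then show ?thesis using c u n True by (simp add: wvec_def)
  next
    case False
    then have "k + (p - k) = p" "p - k < n" using that by auto
    then have "X p = y $ (p - k)" by (simp add: y_def)
    then show ?thesis using c u that False by (simp add: wvec_def)
  qed
  then have "x = vec_of_1 (k + n - 1) (\<lambda>p. c * wvec u k p)"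
    unfolding x_eq by (simp add: vec_of_1_eq_iff)
  then show ?thesis by (auto simp: smult_vec_of_1)
qed

theorem expansion_simple_algebraically_positive:
  assumes T_rows: "\<And>p. p \<in> {1..k - 1} \<Longrightarrow> (\<Sum>q = 1..k. T p q) = l"
    and R_sum: "(\<Sum>q = 1..k. R q) = A $$ (0, 0)"
    and T_const: "\<And>x. (\<And>p. p \<in> {1..k - 1} \<Longrightarrow> (\<Sum>q = 1..k. T p q * x q) = l * x p)
      \<Longrightarrow> (\<And>q. q \<in> {1..k} \<Longrightarrow> x q = x k)"
    and Z_old: "\<And>i. Z (k + i) = v $ i"
    and Z_new: "\<And>q. q \<in> {1..k} \<Longrightarrow> (\<Sum>p = 1..k - 1. Z p * T p q) + v $ 0 * R q
        + (if q = s then (l - A $$ (0, 0)) * v $ 0 else 0) = l * Z q"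
    and Z_pos: "\<And>p. p \<in> {1..k} \<Longrightarrow> Z p > 0"
  defines "B \<equiv> mat_of_1 (k + n - 1) (expansion_entry A k s T R)"
    and "w \<equiv> vec_of_1 (k + n - 1) (wvec u k)" and "z \<equiv> vec_of_1 (k + n - 1) Z"
  shows "simple_eigenvalue B l \<and> B *\<^sub>v w = l \<cdot>\<^sub>v w
    \<and> mat_of_rows (k + n - 1) [z] * B = l \<cdot>\<^sub>m mat_of_rows (k + n - 1) [z] \<and> algebraically_positive B"
proof -
  obtain m where m: "k + n - 1 = Suc m" using k n by (cases "k + n - 1") auto
  then have kn: "k + n = Suc (Suc m)" by simp
  have B: "B \<in> carrier_mat (Suc m) (Suc m)" by (simp add: B_def mat_of_1_def kn)
  have w: "w \<in> carrier_vec (Suc m)" and z: "z \<in> carrier_vec (Suc m)"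
    by (simp_all add: w_def z_def vec_of_1_def kn)
  have w_pos: "w $ i > 0" if "i < Suc m" for i
    using that u_pos[of 0] u_pos[of "i + 1 - k"] kn n by (simp add: w_def vec_of_1_def wvec_def)
  have z_pos: "z $ i > 0" if "i < Suc m" for i
  proof (cases "i + 1 \<le> k")
    case True
    then show ?thesis using that Z_pos[of "i + 1"] kn by (simp add: z_def vec_of_1_def)
  next
    case False
    then have "Z (i + 1) = v $ (i + 1 - k)" "i + 1 - k < n"
      using that kn Z_old[of "i + 1 - k"] by auto
    then show ?thesis using that v_pos kn by (simp add: z_def vec_of_1_def)
  qed
  have Bw: "B *\<^sub>v w = l \<cdot>\<^sub>v w"
    unfolding B_def w_def using T_rows R_sum by (rule expansion_right_eigenvector)
  have zB: "transpose_mat B *\<^sub>v z = l \<cdot>\<^sub>v z"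
    unfolding B_def z_def using Z_old Z_new by (rule expansion_left_eigenvector)
  have line: "\<exists>c. x = c \<cdot>\<^sub>v w" if "x \<in> carrier_vec (Suc m)" "B *\<^sub>v x = l \<cdot>\<^sub>v x" for x
    using expansion_eigenspace_line[OF R_sum T_const] that unfolding B_def w_def m by blast
  have "z \<bullet> w = (\<Sum>i \<in> {0..<Suc m}. z $ i * w $ i)"
    using w by (simp only: scalar_prod_def carrier_vecD)
  also have "\<dots> > 0" using w_pos z_pos by (intro sum_pos) auto
  finally have "z \<bullet> w > 0" .
  then have simple_B: "order l (char_poly B) = 1"
    using w_pos[of 0] by (intro order_char_poly_eq_1I[OF B w _ Bw z zB _ line]) auto
  moreover have "algebraically_positive B"
    by (rule algebraically_positiveI[OF B w w_pos z z_pos Bw zB simple_B])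
  moreover have "mat_of_rows (k + n - 1) [z] * B = l \<cdot>\<^sub>m mat_of_rows (k + n - 1) [z]"
    using left_eigenvector_iff_transpose[OF B z] zB m by simp
  ultimately show ?thesis using Bw by (simp add: simple_eigenvalue_def)
qed

end

end

section \<open>The three constructions\<close>

lemma sum_superdiagonal:
  fixes k q :: nat
  assumes "q \<in> {1..k}"
  shows "(\<Sum>p = 1..k - 1. if q = p + 1 then f p else 0) = (if q = 1 then 0 else f (q - 1))"
proof -
  have "(\<Sum>p = 1..k - 1. if q = p + 1 then f p else 0) = (\<Sum>p = 1..k - 1. if p = q - 1 then f p else 0)"
    using assms by (intro sum.cong) auto
  then show ?thesis using assms by auto
qed

lemma stepwise_eq_last:
  fixes x :: "nat \<Rightarrow> 'a"
  assumes succ: "\<And>p. a \<le> p \<Longrightarrow> p < b \<Longrightarrow> x (Suc p) = x p" and "a \<le> q" and "q \<le> b"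
  shows "x q = x b"
  using \<open>q \<le> b\<close>
proof (induction q rule: inc_induct)
  case (step p)
  then show ?case using succ[of p] \<open>a \<le> q\<close> by simp
qed simp

definition perturbed_superdiagonal :: "real \<Rightarrow> real \<Rightarrow> nat \<Rightarrow> nat \<Rightarrow> nat \<Rightarrow> nat \<Rightarrow> real" where
  "perturbed_superdiagonal l e j s p q =
    (if q = p + 1 then (if p = j then e * l else l) else 0) + (if p = j \<and> q = s then (1 - e) * l else 0)"

lemma perturbed_superdiagonal_row:
  fixes k :: nat
  assumes "p \<in> {1..k - 1}" and "s \<in> {1..k}"
  shows "(\<Sum>q = 1..k. perturbed_superdiagonal l e j s p q * x q)
    = (if p = j then e * l * x (p + 1) + (1 - e) * l * x s else l * x (p + 1))"
proof -
  have "p + 1 \<le> k" using assms(1) by auto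
  then show ?thesis
    using assms by (simp add: perturbed_superdiagonal_def distrib_right sum.distrib
        if_distrib[of "\<lambda>y. y * _"] cong: if_cong)
qed

context positive_simple_eigenvalue
begin

lemma superdiagonal_eigen_const:
  fixes k :: nat
  assumes "\<And>p. p \<in> {1..k - 1} \<Longrightarrow> (\<Sum>q = 1..k. (if q = p + 1 then l else 0) * x q) = l * x p"
    and "q \<in> {1..k}"
  shows "x q = x k"
proof (rule stepwise_eq_last[where a = 1 and b = k])
  fix p assume "1 \<le> p" "p < k"
  then have "l * x (Suc p) = l * x p"
    using assms(1)[of p] by (simp add: if_distrib[of "\<lambda>y. y * _"] cong: if_cong)
  then show "x (Suc p) = x p" using l_pos by simp
qed (use assms(2) in auto)

lemma B3_expansion:
  assumes s: "s \<in> {1..k}"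
  shows "mat_of_1 (k + n - 1) (B3 A l e k n s) = mat_of_1 (k + n - 1) (expansion_entry A k s
    (\<lambda>p q. if q = p + 1 then l else 0)
    (\<lambda>q. if q = 1 then e * A $$ (0, 0) else if q = s then (1 - e) * A $$ (0, 0) else 0))"
proof (rule mat_of_1_cong)
  fix p q assume "p \<in> {1..k + n - 1}" "q \<in> {1..k + n - 1}"
  then show "B3 A l e k n s p q = expansion_entry A k s
    (\<lambda>p q. if q = p + 1 then l else 0)
    (\<lambda>q. if q = 1 then e * A $$ (0, 0) else if q = s then (1 - e) * A $$ (0, 0) else 0) p q"
    using s n by (auto simp: B3_def expansion_entry_def)
qed

lemma B3_spectral:
  assumes e: "0 < e" "e \<le> 1" and s: "s \<in> {1..k}" and e1: "s = 1 \<Longrightarrow> e = 1"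
  shows "simple_eigenvalue (mat_of_1 (k + n - 1) (B3 A l e k n s)) l
    \<and> mat_of_1 (k + n - 1) (B3 A l e k n s) *\<^sub>v vec_of_1 (k + n - 1) (wvec u k)
      = l \<cdot>\<^sub>v vec_of_1 (k + n - 1) (wvec u k)
    \<and> mat_of_rows (k + n - 1) [vec_of_1 (k + n - 1) (z3 A l e v k s)] * mat_of_1 (k + n - 1) (B3 A l e k n s)
      = l \<cdot>\<^sub>m mat_of_rows (k + n - 1) [vec_of_1 (k + n - 1) (z3 A l e v k s)]
    \<and> algebraically_positive (mat_of_1 (k + n - 1) (B3 A l e k n s))"
  unfolding B3_expansion[OF s]
proof (rule expansion_simple_algebraically_positive)
  show "1 \<le> k" and "s \<in> {1..k}" using s by auto
  show "(\<Sum>q = 1..k. if q = p + 1 then l else 0) = l" if "p \<in> {1..k - 1}" for p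
    using that by auto
  show "(\<Sum>q = 1..k. if q = 1 then e * A $$ (0, 0) else if q = s then (1 - e) * A $$ (0, 0) else 0)
      = A $$ (0, 0)"
    using s e1 by (cases "s = 1") (auto simp: sum.If_cases algebra_simps)
  show "x q = x k" if "\<And>p. p \<in> {1..k - 1} \<Longrightarrow> (\<Sum>q = 1..k. (if q = p + 1 then l else 0) * x q) = l * x p"
    and "q \<in> {1..k}" for x q
    using superdiagonal_eigen_const that by blast
  show "z3 A l e v k s (k + i) = v $ i" for i
    using s by (auto simp: z3_def)
  show "z3 A l e v k s p > 0" if "p \<in> {1..k}" for p
    using that e v_pos[of 0] n a11_pos l_pos by (simp add: z3_def)
  show "(\<Sum>p = 1..k - 1. z3 A l e v k s p * (if q = p + 1 then l else 0))
      + v $ 0 * (if q = 1 then e * A $$ (0, 0) else if q = s then (1 - e) * A $$ (0, 0) else 0)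
      + (if q = s then (l - A $$ (0, 0)) * v $ 0 else 0) = l * z3 A l e v k s q"
    if q: "q \<in> {1..k}" for q
  proof -
    have "(\<Sum>p = 1..k - 1. z3 A l e v k s p * (if q = p + 1 then l else 0))
        = (if q = 1 then 0 else z3 A l e v k s (q - 1) * l)"
      using sum_superdiagonal[OF q, of "\<lambda>p. z3 A l e v k s p * l"]
      by (simp add: if_distrib[of "\<lambda>y. _ * y"] cong: if_cong)
    then show ?thesis
      using q s e1 l_pos by (auto simp: z3_def field_simps)
  qed
qed

lemma perturbed_superdiagonal_eigen_const:
  fixes k :: nat
  assumes e: "0 < e" and j: "j \<in> {1..k - 1}" and s: "s \<in> {1..k} - {j + 1}"
    and rows: "\<And>p. p \<in> {1..k - 1} \<Longrightarrow> (\<Sum>q = 1..k. perturbed_superdiagonal l e j s p q * x q) = l * x p"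
    and q: "q \<in> {1..k}"
  shows "x q = x k"
proof -
  have s': "s \<in> {1..k}" using s by simp
  have step: "x (Suc p) = x p" if "1 \<le> p" "p < k" "p \<noteq> j" for p
  proof -
    have p: "p \<in> {1..k - 1}" using that by auto
    show ?thesis
      using rows[OF p] perturbed_superdiagonal_row[OF p s'] that l_pos by simp
  qed
  have at_j: "e * l * x (j + 1) + (1 - e) * l * x s = l * x j"
    using rows[OF j] perturbed_superdiagonal_row[OF j s'] by simp
  have below: "x p = x j" if "1 \<le> p" "p \<le> j" for p
    using that j by (intro stepwise_eq_last[where a = 1 and b = j]) (auto intro: step)
  have above: "x p = x k" if "j + 1 \<le> p" "p \<le> k" for p
    using that j by (intro stepwise_eq_last[where a = "j + 1" and b = k]) (auto intro: step)
  have "x (Suc j) = x j"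
  proof (cases "s \<le> j")
    case True
    then have "x s = x j" using below[of s] s by auto
    then have "e * l * x (j + 1) = e * l * x j" using at_j by (simp add: algebra_simps)
    then show ?thesis using e l_pos by simp
  next
    case False
    then have "x s = x (j + 1)" using above[of s] above[of "j + 1"] s j by auto
    then have "l * x (j + 1) = l * x j" using at_j by (simp add: algebra_simps)
    then show ?thesis using l_pos by simp
  qed
  then have "x (Suc p) = x p" if "1 \<le> p" "p < k" for p
    using step that by (cases "p = j") auto
  then show ?thesis using q by (intro stepwise_eq_last[where a = 1 and b = k]) auto
qed

lemma B2_expansion:
  assumes j: "j \<in> {1..k - 1}" and s: "s \<in> {1..k} - {j + 1}"
  shows "mat_of_1 (k + n - 1) (B2 A l e k n j s) = mat_of_1 (k + n - 1) (expansion_entry A k s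
    (perturbed_superdiagonal l e j s) (\<lambda>q. if q = 1 then A $$ (0, 0) else 0))"
proof (rule mat_of_1_cong)
  fix p q assume p: "p \<in> {1..k + n - 1}" and q: "q \<in> {1..k + n - 1}"
  consider "p < k" | "p = k" | "k < p" by linarith
  then show "B2 A l e k n j s p q = expansion_entry A k s
    (perturbed_superdiagonal l e j s) (\<lambda>q. if q = 1 then A $$ (0, 0) else 0) p q"
    by cases (use p q j s n in \<open>auto simp: B2_def expansion_entry_def perturbed_superdiagonal_def\<close>)
qed

lemma z2_new_columns:
  assumes e: "0 < e" and j: "j \<in> {1..k - 1}" and s: "s \<in> {1..k} - {j + 1}" and q: "q \<in> {1..k}"
  shows "(\<Sum>p = 1..k - 1. z2 A l e v k j s p * perturbed_superdiagonal l e j s p q)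
      + v $ 0 * (if q = 1 then A $$ (0, 0) else 0)
      + (if q = s then (l - A $$ (0, 0)) * v $ 0 else 0) = l * z2 A l e v k j s q"
proof -
  let ?z = "z2 A l e v k j s"
  have "(\<Sum>p = 1..k - 1. ?z p * perturbed_superdiagonal l e j s p q)
      = (\<Sum>p = 1..k - 1. (if q = p + 1 then ?z p * (if p = j then e * l else l) else 0)
        + (if p = j then (if q = s then ?z p * ((1 - e) * l) else 0) else 0))"
    by (intro sum.cong) (auto simp: perturbed_superdiagonal_def distrib_left)
  also have "\<dots> = (if q = 1 then 0 else ?z (q - 1) * (if q - 1 = j then e * l else l))
      + (if q = s then ?z j * ((1 - e) * l) else 0)"
    unfolding sum.distrib sum_superdiagonal[OF q] using j by simp
  finally have sum_eq: "(\<Sum>p = 1..k - 1. ?z p * perturbed_superdiagonal l e j s p q)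
      = (if q = 1 then 0 else ?z (q - 1) * (if q - 1 = j then e * l else l))
        + (if q = s then ?z j * ((1 - e) * l) else 0)" .
  have z: "?z r = (if s \<le> j then (if r < s then A $$ (0, 0) * v $ 0 / l else if r \<le> j then v $ 0 / e else v $ 0)
      else (if r \<le> j then A $$ (0, 0) * v $ 0 / l else if r < s then e * A $$ (0, 0) * v $ 0 / l else v $ 0))"
    if "r \<in> {1..k}" for r
    using that j s unfolding z2_def by auto
  have j': "j \<in> {1..k}" using j by auto
  show ?thesis
  proof (cases "q = 1")
    case True
    then show ?thesis
      unfolding sum_eq z[OF q] z[OF j'] using j s e l_pos by (auto simp: field_simps)
  next
    case False
    then have q': "q - 1 \<in> {1..k}" using q by auto
    show ?thesis
      unfolding sum_eq z[OF q] z[OF j'] z[OF q'] using False q j s e l_pos by (auto simp: field_simps)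
  qed
qed

lemma B2_spectral:
  assumes e: "0 < e" "e < 1" and j: "j \<in> {1..k - 1}" and s: "s \<in> {1..k} - {j + 1}"
  shows "simple_eigenvalue (mat_of_1 (k + n - 1) (B2 A l e k n j s)) l
    \<and> mat_of_1 (k + n - 1) (B2 A l e k n j s) *\<^sub>v vec_of_1 (k + n - 1) (wvec u k)
      = l \<cdot>\<^sub>v vec_of_1 (k + n - 1) (wvec u k)
    \<and> mat_of_rows (k + n - 1) [vec_of_1 (k + n - 1) (z2 A l e v k j s)] * mat_of_1 (k + n - 1) (B2 A l e k n j s)
      = l \<cdot>\<^sub>m mat_of_rows (k + n - 1) [vec_of_1 (k + n - 1) (z2 A l e v k j s)]
    \<and> algebraically_positive (mat_of_1 (k + n - 1) (B2 A l e k n j s))"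
  unfolding B2_expansion[OF j s]
proof (rule expansion_simple_algebraically_positive)
  have s': "s \<in> {1..k}" using s by simp
  show "1 \<le> k" and "s \<in> {1..k}" using s by auto
  show "(\<Sum>q = 1..k. perturbed_superdiagonal l e j s p q) = l" if "p \<in> {1..k - 1}" for p
    using perturbed_superdiagonal_row[OF that s', of l e j "\<lambda>_. 1"] by (simp add: algebra_simps)
  show "(\<Sum>q = 1..k. if q = 1 then A $$ (0, 0) else 0) = A $$ (0, 0)"
    using s by simp
  show "x q = x k"
    if "\<And>p. p \<in> {1..k - 1} \<Longrightarrow> (\<Sum>q = 1..k. perturbed_superdiagonal l e j s p q * x q) = l * x p"
      and "q \<in> {1..k}" for x q
    using perturbed_superdiagonal_eigen_const[OF e(1) j s] that by blast
  show "z2 A l e v k j s (k + i) = v $ i" for i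
    using j s by (auto simp: z2_def)
  show "z2 A l e v k j s p > 0" if "p \<in> {1..k}" for p
    using that e v_pos[of 0] n a11_pos l_pos by (simp add: z2_def)
  show "(\<Sum>p = 1..k - 1. z2 A l e v k j s p * perturbed_superdiagonal l e j s p q)
      + v $ 0 * (if q = 1 then A $$ (0, 0) else 0)
      + (if q = s then (l - A $$ (0, 0)) * v $ 0 else 0) = l * z2 A l e v k j s q"
    if "q \<in> {1..k}" for q
    using e(1) j s that by (rule z2_new_columns)
qed

lemma B1_spectral:
  assumes j: "j \<in> {1..k}"
  shows "simple_eigenvalue (mat_of_1 (k + n - 1) (B1 A l k n j)) l
    \<and> mat_of_1 (k + n - 1) (B1 A l k n j) *\<^sub>v vec_of_1 (k + n - 1) (wvec u k)
      = l \<cdot>\<^sub>v vec_of_1 (k + n - 1) (wvec u k)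
    \<and> mat_of_rows (k + n - 1) [vec_of_1 (k + n - 1) (z1 A l v k j)] * mat_of_1 (k + n - 1) (B1 A l k n j)
      = l \<cdot>\<^sub>m mat_of_rows (k + n - 1) [vec_of_1 (k + n - 1) (z1 A l v k j)]
    \<and> algebraically_positive (mat_of_1 (k + n - 1) (B1 A l k n j))"
proof -
  \<comment> \<open>Part 1 is the case \<open>e = 1\<close> of part 3.\<close>
  have "B1 A l k n j p q = B3 A l 1 k n j p q" for p q
    using j unfolding B1_def B3_def by (cases "p = k \<and> q = j") auto
  moreover have "z1 A l v k j = z3 A l 1 v k j"
    by (simp add: z1_def z3_def fun_eq_iff)
  ultimately have "B1 A l k n j = B3 A l 1 k n j" and "z1 A l v k j = z3 A l 1 v k j"
    by blast+
  then show ?thesis using B3_spectral[of 1 j] j by simp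
qed

lemma B2_balance:
  assumes j: "j \<in> {1..k - 1}" and s: "s \<in> {1..k} - {j + 1}" and e: "e \<noteq> 0"
  shows "B2 A l e k n j s j s * z2 A l e v k j s j
      + (\<Sum>i = 1..n - 1. B2 A l e k n j s (k + i) s * z2 A l e v k j s (k + i))
    = (if s \<le> j then (l / e - A $$ (0, 0)) * v $ 0 else (l - e * A $$ (0, 0)) * v $ 0)"
proof -
  have "(\<Sum>i = 1..n - 1. B2 A l e k n j s (k + i) s * z2 A l e v k j s (k + i))
      = (\<Sum>i = 1..n - 1. v $ i * A $$ (i, 0))"
    using j s by (intro sum.cong) (auto simp: B2_def z2_def)
  also have "\<dots> = (l - A $$ (0, 0)) * v $ 0" by (rule first_column_weight)
  finally have sum: "(\<Sum>i = 1..n - 1. B2 A l e k n j s (k + i) s * z2 A l e v k j s (k + i))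
      = (l - A $$ (0, 0)) * v $ 0" .
  have b: "B2 A l e k n j s j s = (1 - e) * l"
    using j s by (auto simp: B2_def)
  have z: "z2 A l e v k j s j = (if s \<le> j then v $ 0 / e else A $$ (0, 0) * v $ 0 / l)"
    using j s by (auto simp: z2_def)
  show ?thesis
  proof (cases "s \<le> j")
    case True
    have "(1 - e) * l * (v $ 0 / e) + (l - A $$ (0, 0)) * v $ 0 = (l / e - A $$ (0, 0)) * v $ 0"
      using e by (simp add: field_simps)
    then show ?thesis unfolding sum b z if_P[OF True] .
  next
    case False
    have "(1 - e) * l * (A $$ (0, 0) * v $ 0 / l) + (l - A $$ (0, 0)) * v $ 0
        = (l - e * A $$ (0, 0)) * v $ 0"
      using l_pos by (simp add: field_simps)
    then show ?thesis unfolding sum b z if_not_P[OF False] .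
  qed
qed

lemma B3_balance:
  assumes s: "s \<in> {2..k}"
  shows "B3 A l e k n s k s * z3 A l e v k s k
      + (\<Sum>i = 1..n - 1. B3 A l e k n s (k + i) s * z3 A l e v k s (k + i))
    = (l - e * A $$ (0, 0)) * v $ 0"
proof -
  have "(\<Sum>i = 1..n - 1. B3 A l e k n s (k + i) s * z3 A l e v k s (k + i))
      = (\<Sum>i = 1..n - 1. v $ i * A $$ (i, 0))"
    using s by (intro sum.cong) (auto simp: B3_def z3_def)
  also have "\<dots> = (l - A $$ (0, 0)) * v $ 0" by (rule first_column_weight)
  finally have sum: "(\<Sum>i = 1..n - 1. B3 A l e k n s (k + i) s * z3 A l e v k s (k + i))
      = (l - A $$ (0, 0)) * v $ 0" .
  have b: "B3 A l e k n s k s = (1 - e) * A $$ (0, 0)" and z: "z3 A l e v k s k = v $ 0"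
    using s by (auto simp: B3_def z3_def)
  show ?thesis
    unfolding sum b z by (simp add: algebra_simps)
qed

lemma balancing_weight_exists:
  obtains e' where "0 < e'" "e' < 1" "l - e' * A $$ (0, 0) > 0" "l / e' - A $$ (0, 0) > 0"
proof
  let ?e = "l / (l + A $$ (0, 0))"
  show "0 < ?e" and "?e < 1" using l_pos a11_pos by simp_all
  show "l - ?e * A $$ (0, 0) > 0" and "l / ?e - A $$ (0, 0) > 0"
    using l_pos a11_pos by (simp_all add: field_simps)
qed

lemma B2_balance_positive:
  assumes j: "j \<in> {1..k - 1}" and s: "s \<in> {1..k} - {j + 1}"
  shows "\<exists>e' > 0. e' < 1 \<and> B2 A l e' k n j s j s * z2 A l e' v k j s j
      + (\<Sum>i = 1..n - 1. B2 A l e' k n j s (k + i) s * z2 A l e' v k j s (k + i)) > 0"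
proof -
  obtain e' where "0 < e'" "e' < 1" "l - e' * A $$ (0, 0) > 0" "l / e' - A $$ (0, 0) > 0"
    by (rule balancing_weight_exists)
  then show ?thesis
    using B2_balance[OF j s] v_pos[of 0] n by (intro exI[of _ e']) auto
qed

lemma B3_balance_positive:
  assumes s: "s \<in> {2..k}"
  shows "\<exists>e' > 0. e' < 1 \<and> B3 A l e' k n s k s * z3 A l e' v k s k
      + (\<Sum>i = 1..n - 1. B3 A l e' k n s (k + i) s * z3 A l e' v k s (k + i)) > 0"
proof -
  obtain e' where "0 < e'" "e' < 1" "l - e' * A $$ (0, 0) > 0"
    using balancing_weight_exists by blast
  then show ?thesis
    using B3_balance[OF s] v_pos[of 0] n by (intro exI[of _ e']) auto
qed

end

theorem theorem2p4:
  fixes e l :: real and n k :: nat and A :: "real mat" and u v :: "real vec"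
  assumes e: "0 < e" "e < 1"
    and nk: "n \<ge> 1" "k \<ge> 1"
    and A: "A \<in> carrier_mat n n" "A $$ (0, 0) > 0"
    and l: "l > 0" "simple_eigenvalue A l"
    and uv: "dim_vec u = n" "dim_vec v = n" "\<forall>i < n. u $ i > 0" "\<forall>i < n. v $ i > 0"
    and right: "A *\<^sub>v u = l \<cdot>\<^sub>v u"
    and left: "mat_of_rows n [v] * A = l \<cdot>\<^sub>m mat_of_rows n [v]"
  shows
    "(\<forall>j \<in> {1..k}.
        let N = k + n - 1; B = mat_of_1 N (B1 A l k n j);
            w = vec_of_1 N (wvec u k); z = vec_of_1 N (z1 A l v k j) in
        simple_eigenvalue B l \<and> B *\<^sub>v w = l \<cdot>\<^sub>v w \<and>
        mat_of_rows N [z] * B = l \<cdot>\<^sub>m mat_of_rows N [z] \<and>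
        algebraically_positive B)
   \<and> (\<forall>j \<in> {1..k-1}. \<forall>s \<in> {1..k} - {j + 1}.
        let N = k + n - 1; B = mat_of_1 N (B2 A l e k n j s);
            w = vec_of_1 N (wvec u k); z = vec_of_1 N (z2 A l e v k j s);
            Q = (\<lambda>e'. B2 A l e' k n j s j s * z2 A l e' v k j s j
                 + (\<Sum>i = 1..n-1. B2 A l e' k n j s (k + i) s * z2 A l e' v k j s (k + i))) in
        simple_eigenvalue B l \<and> B *\<^sub>v w = l \<cdot>\<^sub>v w \<and>
        mat_of_rows N [z] * B = l \<cdot>\<^sub>m mat_of_rows N [z] \<and>
        algebraically_positive B \<and>
        Q e = (if s \<le> j then (l / e - A $$ (0, 0)) * v $ 0 else (l - e * A $$ (0, 0)) * v $ 0) \<and>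
        (\<exists>e' > 0. e' < 1 \<and> Q e' > 0))
   \<and> (\<forall>s \<in> {2..k}.
        let N = k + n - 1; B = mat_of_1 N (B3 A l e k n s);
            w = vec_of_1 N (wvec u k); z = vec_of_1 N (z3 A l e v k s);
            Q = (\<lambda>e'. B3 A l e' k n s k s * z3 A l e' v k s k
                 + (\<Sum>i = 1..n-1. B3 A l e' k n s (k + i) s * z3 A l e' v k s (k + i))) in
        simple_eigenvalue B l \<and> B *\<^sub>v w = l \<cdot>\<^sub>v w \<and>
        mat_of_rows N [z] * B = l \<cdot>\<^sub>m mat_of_rows N [z] \<and>
        algebraically_positive B \<and>
        Q e = (l - e * A $$ (0, 0)) * v $ 0 \<and>
        (\<exists>e' > 0. e' < 1 \<and> Q e' > 0))"
proof -
  have u: "u \<in> carrier_vec n" and v: "v \<in> carrier_vec n"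
    using uv(1,2) by (auto intro: carrier_vecI)
  interpret positive_simple_eigenvalue A n l u v
  proof
    show "transpose_mat A *\<^sub>v v = l \<cdot>\<^sub>v v"
      using left left_eigenvector_iff_transpose[OF A(1) v] by simp
    show "order l (char_poly A) = 1"
      using l(2) by (simp add: simple_eigenvalue_def)
  qed (use nk A l uv u v right in auto)
  show ?thesis
    unfolding Let_def
    using B1_spectral B2_spectral[OF e] B2_balance B2_balance_positive B3_spectral[of e] B3_balance
      B3_balance_positive e
    by auto
qed

end
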